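(* Let $\varphi\colon\mathbb X\to\mathbb R$ be locally Lipschitz continuous, let $\Phi\colon\mathbb X\rightrightarrows\mathbb Y$ have closed graph, fix $\bar y\in\operatorname{Im}\Phi$, and consider the problem $\min\{\varphi(x)\mid \bar y\in\Phi(x)\}$. Let $\bar x$ be a local minimizer of this problem such that, for each critical direction $u\in\mathbb S_{\mathbb X}$ of the problem at $\bar x$, $\Phi$ is asymptotically regular at $(\bar x,\bar y)$ in direction $u$. Then $\bar x$ is M-stationary, i.e., there is $\lambda\in\mathbb Y$ with $0\in\partial\varphi(\bar x)+D^*\Phi(\bar x,\bar y)(\lambda)$.
   Context: $\mathbb X,\mathbb Y$ Euclidean spaces, $\mathbb S_{\mathbb X}$ the unit sphere. $\partial\varphi$ is the limiting (Mordukhovich) subdifferential, $\widehat D^*$ and $D^*$ are the regular and limiting coderivatives: $\widehat D^*\Phi(x,y)(y^* )=\{x^*\mid (x^*,-y^* )\in\widehat{\mathcal N}_{\operatorname{gph}\Phi}(x,y)\}$, analogously $D^*$ with the limiting normal cone. For a set-valued $\Psi$, $\operatorname{Im}\Psi=\bigcup_{z}\Psi(z)$. Critical direction: $u\in\mathbb S_{\mathbb X}$ is critical at feasible $\bar x$ if there are $u_k\to u$, $v_k\to0$, $t_k\searrow0$ with $(\bar x+t_ku_k,\bar y+t_kv_k)\in\operatorname{gph}\Phi$ for all $k$ and $\limsup_k(\varphi(\bar x+t_ku_k)-\varphi(\bar x))/t_k\le0$. Asymptotic regularity in direction $u$: $\Phi$ is asymptotically regular at $(\bar x,\bar y)\in\operatorname{gph}\Phi$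 in direction $u\in\mathbb S_{\mathbb X}$ if for all sequences $\{(x_k,y_k)\}\subset\operatorname{gph}\Phi$, $\{x_k^*\}\subset\mathbb X$, $\{\lambda_k\}\subset\mathbb Y$ and $x^*\in\mathbb X$, $y^*\in\mathbb Y$ with $x_k\notin\Phi^{-1}(\bar y)$, $y_k\ne\bar y$, $x_k^*\in\widehat D^*\Phi(x_k,y_k)(\lambda_k)$ for all $k$ and $x_k\to\bar x$, $y_k\to\bar y$, $x_k^*\to x^*$, $(x_k-\bar x)/\|x_k-\bar x\|\to u$, $(y_k-\bar y)/\|x_k-\bar x\|\to0$, $\|\lambda_k\|\to\infty$, $(y_k-\bar y)/\|y_k-\bar y\|-\lambda_k/\|\lambda_k\|\to0$, $(\|y_k-\bar y\|/\|x_k-\bar x\|)\lambda_k\to y^*$, one has $x^*\in\operatorname{Im}D^*\Phi(\bar x,\bar y)$. *)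

theory Defs
  imports "HOL-Analysis.Analysis"
begin

definition gph :: "('a \<Rightarrow> 'b set) \<Rightarrow> ('a \<times> 'b) set" where
  "gph \<Phi> = {(x, y). y \<in> \<Phi> x}"

definition regular_normal_cone :: "'a::real_inner set \<Rightarrow> 'a \<Rightarrow> 'a set" where
  "regular_normal_cone C z =
     {zs. z \<in> C \<and> (\<forall>\<epsilon>>0. \<exists>\<delta>>0. \<forall>z'\<in>C. norm (z' - z) < \<delta> \<longrightarrow>
              inner zs (z' - z) \<le> \<epsilon> * norm (z' - z))}"

definition limiting_normal_cone :: "'a::real_inner set \<Rightarrow> 'a \<Rightarrow> 'a set" where
  "limiting_normal_cone C z =
     {zs. \<exists>zk zsk. (\<forall>k. zk k \<in> C \<and> zsk k \<in> regular_normal_cone C (zk k)) \<and>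
            zk \<longlonglongrightarrow> z \<and> zsk \<longlonglongrightarrow> zs}"

definition regular_subdiff :: "('a::real_inner \<Rightarrow> real) \<Rightarrow> 'a \<Rightarrow> 'a set" where
  "regular_subdiff f x =
     {xs. \<forall>\<epsilon>>0. \<exists>\<delta>>0. \<forall>x'. norm (x' - x) < \<delta> \<longrightarrow>
            f x' - f x - inner xs (x' - x) \<ge> - \<epsilon> * norm (x' - x)}"

definition limiting_subdiff :: "('a::real_inner \<Rightarrow> real) \<Rightarrow> 'a \<Rightarrow> 'a set" where
  "limiting_subdiff f x =
     {xs. \<exists>xk xsk. (\<forall>k. xsk k \<in> regular_subdiff f (xk k)) \<and>
            xk \<longlonglongrightarrow> x \<and> (\<lambda>k. f (xk k)) \<longlonglongrightarrow> f x \<and> xsk \<longlonglongrightarrow> xs}"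

definition regular_coderiv :: "('a::real_inner \<Rightarrow> 'b::real_inner set) \<Rightarrow> 'a \<Rightarrow> 'b \<Rightarrow> 'b \<Rightarrow> 'a set" where
  "regular_coderiv \<Phi> x y ys = {xs. (xs, - ys) \<in> regular_normal_cone (gph \<Phi>) (x, y)}"

definition limiting_coderiv :: "('a::real_inner \<Rightarrow> 'b::real_inner set) \<Rightarrow> 'a \<Rightarrow> 'b \<Rightarrow> 'b \<Rightarrow> 'a set" where
  "limiting_coderiv \<Phi> x y ys = {xs. (xs, - ys) \<in> limiting_normal_cone (gph \<Phi>) (x, y)}"

definition Im :: "('c \<Rightarrow> 'd set) \<Rightarrow> 'd set" where
  "Im \<Psi> = (\<Union>z. \<Psi> z)"

definition locally_lipschitz :: "('a::metric_space \<Rightarrow> real) \<Rightarrow> bool" where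
  "locally_lipschitz f \<longleftrightarrow> (\<forall>x. \<exists>U L. open U \<and> x \<in> U \<and> L-lipschitz_on U f)"

definition local_minimizer :: "('a::metric_space \<Rightarrow> real) \<Rightarrow> ('a \<Rightarrow> 'b set) \<Rightarrow> 'b \<Rightarrow> 'a \<Rightarrow> bool" where
  "local_minimizer \<phi> \<Phi> ybar xbar \<longleftrightarrow> ybar \<in> \<Phi> xbar \<and>
     (\<exists>\<epsilon>>0. \<forall>x. ybar \<in> \<Phi> x \<and> dist x xbar < \<epsilon> \<longrightarrow> \<phi> xbar \<le> \<phi> x)"

definition critical_direction ::
  "('a::real_normed_vector \<Rightarrow> real) \<Rightarrow> ('a \<Rightarrow> 'b::real_normed_vector set) \<Rightarrow> 'a \<Rightarrow> 'b \<Rightarrow> 'a \<Rightarrow> bool" where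
  "critical_direction \<phi> \<Phi> xbar ybar u \<longleftrightarrow> norm u = 1 \<and>
     (\<exists>uk vk tk. uk \<longlonglongrightarrow> u \<and> vk \<longlonglongrightarrow> 0 \<and> (\<forall>k. tk k > 0) \<and> tk \<longlonglongrightarrow> 0 \<and>
        (\<forall>k. (xbar + tk k *\<^sub>R uk k, ybar + tk k *\<^sub>R vk k) \<in> gph \<Phi>) \<and>
        limsup (\<lambda>k. ereal ((\<phi> (xbar + tk k *\<^sub>R uk k) - \<phi> xbar) / tk k)) \<le> 0)"

definition asymptotically_regular ::
  "('a::real_inner \<Rightarrow> 'b::real_inner set) \<Rightarrow> 'a \<Rightarrow> 'b \<Rightarrow> 'a \<Rightarrow> bool" where
  "asymptotically_regular \<Phi> xbar ybar u \<longleftrightarrow>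
     (\<forall>xk yk xsk lk xs ys.
        (\<forall>k. (xk k, yk k) \<in> gph \<Phi> \<and> ybar \<notin> \<Phi> (xk k) \<and> yk k \<noteq> ybar \<and>
             xsk k \<in> regular_coderiv \<Phi> (xk k) (yk k) (lk k)) \<and>
        xk \<longlonglongrightarrow> xbar \<and> yk \<longlonglongrightarrow> ybar \<and> xsk \<longlonglongrightarrow> xs \<and>
        (\<lambda>k. (1 / norm (xk k - xbar)) *\<^sub>R (xk k - xbar)) \<longlonglongrightarrow> u \<and>
        (\<lambda>k. (1 / norm (xk k - xbar)) *\<^sub>R (yk k - ybar)) \<longlonglongrightarrow> 0 \<and>
        filterlim (\<lambda>k. norm (lk k)) at_top sequentially \<and>
        (\<lambda>k. (1 / norm (yk k - ybar)) *\<^sub>R (yk k - ybar) - (1 / norm (lk k)) *\<^sub>R lk k) \<longlonglongrightarrow> 0 \<and>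
        (\<lambda>k. (norm (yk k - ybar) / norm (xk k - xbar)) *\<^sub>R lk k) \<longlonglongrightarrow> ys
      \<longrightarrow> xs \<in> Im (limiting_coderiv \<Phi> xbar ybar))"

end

theory Submission
  imports Defs
begin

text \<open>Penalize the constraint: for k \<in> \<nat> minimize \<phi> x + k \<parallel>y - ybar\<parallel> + \<parallel>x - xbar\<parallel>^2 over the
  graph of \<Phi> near (xbar, ybar). If (xbar, ybar) itself is a minimizer for some k, a fuzzy sum rule
  at (xbar, ybar) gives approximate stationarity with multipliers bounded by k + 1, and a limit
  yields M-stationarity. Otherwise the minimizers (x_k, y_k) are infeasible and converge to
  (xbar, ybar); the fuzzy sum rule at them gives multipliers of norm about k aligned with
  y_k - ybar, where \<parallel>y_k - ybar\<parallel> = o(\<parallel>x_k - xbar\<parallel>) and the slope of \<phi> from xbar to x_k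
  is asymptotically nonpositive. These are exactly the sequences in the definition of asymptotic
  regularity along the critical direction u = lim (x_k - xbar) / \<parallel>x_k - xbar\<parallel>, which turns
  the limit of the approximate multipliers into a limiting coderivative element. The fuzzy sum
  rule itself is proved by doubling the variables and minimizing over a compact set.\<close>

lemma lipschitz_on_diff_le:
  assumes "L-lipschitz_on S f" "x \<in> S" "y \<in> S"
  shows "f x - f y \<le> L * norm (x - y)"
  using lipschitz_onD[OF assms] by (simp add: dist_norm dist_real_def)

lemma lipschitz_on_scaled_dist:
  fixes c :: "'a::real_normed_vector"
  assumes "k \<ge> 0"
  shows "k-lipschitz_on S (\<lambda>y. k * norm (y - c))"
proof (rule lipschitz_onI[OF _ assms])
  fix x y :: 'a
  have "\<bar>norm (x - c) - norm (y - c)\<bar> \<le> norm (x - y)"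
    using norm_triangle_ineq3[of "x - c" "y - c"] by simp
  then have "k * \<bar>norm (x - c) - norm (y - c)\<bar> \<le> k * norm (x - y)"
    using assms by (rule mult_left_mono)
  then show "dist (k * norm (x - c)) (k * norm (y - c)) \<le> k * dist x y"
    using assms by (simp add: dist_real_def dist_norm abs_mult right_diff_distrib[symmetric])
qed

lemma power2_norm_diff_shift:
  fixes x z q :: "'a::real_inner"
  shows "(norm (z - q))\<^sup>2 = (norm (x - q))\<^sup>2 + 2 * inner (x - q) (z - x) + (norm (z - x))\<^sup>2"
  by (simp add: power2_norm_eq_inner inner_commute algebra_simps)

lemma norm_diff_near_bounds:
  fixes p q c :: "'a::real_normed_vector"
  assumes "norm (p - q) < \<eta>" "\<eta> \<le> norm (q - c) / 2"
  shows "norm (q - c) / 2 \<le> norm (p - c)" "norm (p - c) \<le> 2 * norm (q - c)"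
  using norm_triangle_ineq3[of "p - c" "q - c"] assms by (auto simp: abs_le_iff)

lemma norm_sgn_diff_le:
  fixes p q :: "'a::real_normed_vector"
  assumes "p \<noteq> 0"
  shows "norm ((1 / norm p) *\<^sub>R p - (1 / norm q) *\<^sub>R q) \<le> 2 * norm (p - q) / norm p"
proof (cases "q = 0")
  case True
  then show ?thesis using assms by simp
next
  case False
  have np: "norm p > 0" using assms by simp
  have "norm ((1 / norm p - 1 / norm q) *\<^sub>R q) = \<bar>norm q - norm p\<bar> / norm p"
    using np False by (simp add: field_simps abs_div abs_mult)
  also have "\<dots> \<le> norm (p - q) / norm p"
    using np by (intro divide_right_mono) (auto simp: norm_triangle_ineq3 abs_minus_commute)
  finally have "norm ((1 / norm p - 1 / norm q) *\<^sub>R q) \<le> norm (p - q) / norm p" .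
  moreover have "(1 / norm p) *\<^sub>R p - (1 / norm q) *\<^sub>R q
      = (1 / norm p) *\<^sub>R (p - q) + (1 / norm p - 1 / norm q) *\<^sub>R q"
    by (simp add: algebra_simps)
  ultimately show ?thesis
    using norm_triangle_ineq[of "(1 / norm p) *\<^sub>R (p - q)" "(1 / norm p - 1 / norm q) *\<^sub>R q"]
    by simp
qed

lemma norm_sgn_diff_scaled_sgn_add:
  fixes p q e :: "'a::real_normed_vector" and k :: real
  defines "b \<equiv> (k / norm q) *\<^sub>R q"
  assumes "p \<noteq> 0" "q \<noteq> 0" "k > 0"
  shows "norm ((1 / norm p) *\<^sub>R p - (1 / norm (b + e)) *\<^sub>R (b + e)) \<le> 2 * norm (p - q) / norm p + 2 * norm e / k"
proof -
  have nb: "norm b = k" using assms by (simp add: b_def)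
  have "(1 / norm b) *\<^sub>R b = (1 / norm q) *\<^sub>R q" using assms by (simp add: nb b_def)
  then have "norm ((1 / norm p) *\<^sub>R p - (1 / norm (b + e)) *\<^sub>R (b + e))
      \<le> norm ((1 / norm p) *\<^sub>R p - (1 / norm q) *\<^sub>R q) + norm ((1 / norm b) *\<^sub>R b - (1 / norm (b + e)) *\<^sub>R (b + e))"
    by (metis norm_diff_triangle_le order_refl)
  also have "\<dots> \<le> 2 * norm (p - q) / norm p + 2 * norm (b - (b + e)) / norm b"
    using assms nb by (intro add_mono norm_sgn_diff_le) auto
  finally show ?thesis by (simp add: nb)
qed

lemma tendsto_const_over_Suc: "(\<lambda>n. c / (real n + 1)) \<longlonglongrightarrow> 0"
  using LIMSEQ_Suc[OF lim_const_over_n[of c]] by (simp add: add.commute)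

lemma tendsto_of_norm_diff_le:
  fixes f :: "nat \<Rightarrow> 'a::real_normed_vector"
  assumes "\<And>n. norm (f n - l) \<le> g n" and "g \<longlonglongrightarrow> 0"
  shows "f \<longlonglongrightarrow> l"
  by (rule LIM_zero_cancel, rule Lim_null_comparison[OF _ assms(2)]) (use assms(1) in auto)

lemma bounded_pair_convergent_subseq:
  fixes f :: "nat \<Rightarrow> 'a::euclidean_space" and g :: "nat \<Rightarrow> 'b::euclidean_space"
  assumes "\<And>n. norm (f n) \<le> B" "\<And>n. norm (g n) \<le> C"
  obtains r a b where "strict_mono r" "(f \<circ> r) \<longlonglongrightarrow> a" "(g \<circ> r) \<longlonglongrightarrow> b"
proof -
  have "norm (f n, g n) \<le> B + C" for n
    using norm_Pair_le[of "f n" "g n"] assms[of n] by linarith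
  then have "bounded (range (\<lambda>n. (f n, g n)))" unfolding bounded_iff by blast
  then obtain r l where r: "strict_mono r" and l: "((\<lambda>n. (f n, g n)) \<circ> r) \<longlonglongrightarrow> l"
    using bounded_imp_convergent_subsequence by blast
  have "(f \<circ> r) \<longlonglongrightarrow> fst l" "(g \<circ> r) \<longlonglongrightarrow> snd l"
    using tendsto_fst[OF l] tendsto_snd[OF l] by (simp_all add: o_def)
  then show ?thesis using that r by blast
qed

section \<open>Regular subgradients and normal vectors\<close>

lemma regular_subdiff_norm_le:
  fixes f :: "'a::real_inner \<Rightarrow> real"
  assumes a: "a \<in> regular_subdiff f w" and lip: "L-lipschitz_on S f" and "ball w \<rho> \<subseteq> S" "\<rho> > 0"
  shows "norm a \<le> L"
proof (rule ccontr)
  assume "\<not> ?thesis"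
  then have big: "norm a > L" by simp
  define \<epsilon> where "\<epsilon> = (norm a - L) / 2"
  have "\<epsilon> > 0" using big by (simp add: \<epsilon>_def)
  then obtain \<delta> where \<delta>: "\<delta> > 0"
    "\<And>w'. norm (w' - w) < \<delta> \<Longrightarrow> f w' - f w - inner a (w' - w) \<ge> - \<epsilon> * norm (w' - w)"
    using a unfolding regular_subdiff_def by blast
  define t where "t = min \<delta> \<rho> / 2"
  have t: "t > 0" "t < \<delta>" "t < \<rho>" using \<delta> \<open>\<rho> > 0\<close> by (auto simp: t_def)
  have a0: "norm a > 0" using big lipschitz_on_nonneg[OF lip] by linarith
  \<comment> \<open>test the subgradient inequality in the direction of a itself\<close>
  define w' where "w' = w + (t / norm a) *\<^sub>R a"
  have n: "norm (w' - w) = t" using t a0 by (simp add: w'_def)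
  then have "w' \<in> S" "w \<in> S"
    using t \<open>ball w \<rho> \<subseteq> S\<close> \<open>\<rho> > 0\<close> by (auto simp: subset_iff dist_norm norm_minus_commute)
  then have "f w' - f w \<le> L * t" using lipschitz_on_diff_le[OF lip] n by metis
  moreover have "inner a (w' - w) = t * norm a" using a0
    by (simp add: w'_def power2_norm_eq_inner[symmetric] power2_eq_square)
  ultimately have "t * norm a \<le> t * (L + \<epsilon>)"
    using \<delta>(2)[of w'] n t by (simp add: algebra_simps)
  then have "norm a \<le> L + \<epsilon>" using t(1) by simp
  then show False using big by (simp add: \<epsilon>_def field_simps)
qed

lemma regular_subdiff_of_prox_min:
  fixes f :: "'a::real_inner \<Rightarrow> real"
  assumes "\<rho> > 0" "m \<ge> 0"
    and min: "\<And>w'. norm (w' - w) < \<rho> \<Longrightarrow> f w + m * (norm (x - w))\<^sup>2 \<le> f w' + m * (norm (x - w'))\<^sup>2"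
  shows "(2 * m) *\<^sub>R (x - w) \<in> regular_subdiff f w"
  unfolding regular_subdiff_def
proof (intro CollectI allI impI)
  fix \<epsilon> :: real
  assume "\<epsilon> > 0"
  define \<delta> where "\<delta> = min \<rho> (\<epsilon> / (m + 1))"
  have "\<delta> > 0" using assms \<open>\<epsilon> > 0\<close> by (simp add: \<delta>_def)
  moreover have "f w' - f w - inner ((2 * m) *\<^sub>R (x - w)) (w' - w) \<ge> - \<epsilon> * norm (w' - w)"
    if w': "norm (w' - w) < \<delta>" for w'
  proof -
    have "m * norm (w' - w) \<le> m * (\<epsilon> / (m + 1))"
      using w' \<open>m \<ge> 0\<close> by (intro mult_left_mono) (auto simp: \<delta>_def)
    also have "\<dots> \<le> \<epsilon>" using \<open>m \<ge> 0\<close> \<open>\<epsilon> > 0\<close> by (simp add: field_simps)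
    finally have "m * norm (w' - w) * norm (w' - w) \<le> \<epsilon> * norm (w' - w)"
      by (rule mult_right_mono) simp
    then have small: "m * (norm (w' - w))\<^sup>2 \<le> \<epsilon> * norm (w' - w)"
      by (simp add: power2_eq_square mult.assoc)
    have eq: "(norm (x - w'))\<^sup>2 = (norm (x - w))\<^sup>2 - 2 * inner (x - w) (w' - w) + (norm (w' - w))\<^sup>2"
      using power2_norm_diff_shift[of x w' w] by (simp add: norm_minus_commute inner_commute inner_diff_left)
    have "m * (norm (x - w'))\<^sup>2
        = m * (norm (x - w))\<^sup>2 - 2 * m * inner (x - w) (w' - w) + m * (norm (w' - w))\<^sup>2"
      unfolding eq by (simp add: algebra_simps del: inner_diff_left inner_diff_right)
    moreover have "inner ((2 * m) *\<^sub>R (x - w)) (w' - w) = 2 * m * inner (x - w) (w' - w)"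
      by (simp only: inner_scaleR_left)
    ultimately show ?thesis
      using min[of w'] w' small by (simp add: \<delta>_def)
  qed
  ultimately show "\<exists>\<delta>>0. \<forall>w'. norm (w' - w) < \<delta> \<longrightarrow>
      f w' - f w - inner ((2 * m) *\<^sub>R (x - w)) (w' - w) \<ge> - \<epsilon> * norm (w' - w)"
    by blast
qed

lemma regular_normal_coneI_quadratic:
  assumes "z \<in> C" "\<rho> > 0" "c \<ge> 0"
    and quad: "\<And>z'. z' \<in> C \<Longrightarrow> norm (z' - z) < \<rho> \<Longrightarrow> inner g (z' - z) \<le> c * (norm (z' - z))\<^sup>2"
  shows "g \<in> regular_normal_cone C z"
  unfolding regular_normal_cone_def
proof (intro CollectI conjI allI impI \<open>z \<in> C\<close>)
  fix \<epsilon> :: real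
  assume "\<epsilon> > 0"
  define \<delta> where "\<delta> = min \<rho> (\<epsilon> / (c + 1))"
  have "\<delta> > 0" using assms \<open>\<epsilon> > 0\<close> by (simp add: \<delta>_def)
  moreover have "inner g (z' - z) \<le> \<epsilon> * norm (z' - z)"
    if z': "z' \<in> C" "norm (z' - z) < \<delta>" for z'
  proof -
    have "c * norm (z' - z) \<le> c * (\<epsilon> / (c + 1))"
      using z' \<open>c \<ge> 0\<close> by (intro mult_left_mono) (auto simp: \<delta>_def)
    also have "\<dots> \<le> \<epsilon>" using \<open>c \<ge> 0\<close> \<open>\<epsilon> > 0\<close> by (simp add: field_simps)
    finally have "c * norm (z' - z) * norm (z' - z) \<le> \<epsilon> * norm (z' - z)"
      by (rule mult_right_mono) simp
    then have "c * (norm (z' - z))\<^sup>2 \<le> \<epsilon> * norm (z' - z)"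
      by (simp add: power2_eq_square mult.assoc)
    then show ?thesis using quad[OF z'(1)] z' by (force simp: \<delta>_def)
  qed
  ultimately show "\<exists>\<delta>>0. \<forall>z'\<in>C. norm (z' - z) < \<delta> \<longrightarrow> inner g (z' - z) \<le> \<epsilon> * norm (z' - z)"
    by blast
qed

lemma eq_scaled_of_inner_ge:
  fixes b d :: "'a::real_inner"
  assumes "d \<noteq> 0" "norm b \<le> k" "k * norm d \<le> inner b d"
  shows "b = (k / norm d) *\<^sub>R d"
proof -
  define s where "s = norm d"
  have s: "s > 0" using assms(1) by (simp add: s_def)
  have k: "k \<ge> 0" using assms(2) norm_ge_zero[of b] by linarith
  have "(norm (b - (k / s) *\<^sub>R d))\<^sup>2 = inner (b - (k / s) *\<^sub>R d) (b - (k / s) *\<^sub>R d)"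
    by (simp add: power2_norm_eq_inner)
  also have "\<dots> = inner b b - 2 * (k / s) * inner b d + (k / s)\<^sup>2 * inner d d"
    by (simp add: inner_commute power2_eq_square algebra_simps)
  also have "\<dots> = (norm b)\<^sup>2 - 2 * (k / s) * inner b d + k\<^sup>2"
    using s by (simp add: power2_norm_eq_inner[symmetric] s_def field_simps)
  also have "\<dots> \<le> k\<^sup>2 - 2 * (k / s) * (k * s) + k\<^sup>2"
  proof -
    have "(norm b)\<^sup>2 \<le> k\<^sup>2" using assms(2) by (simp add: power_mono)
    moreover have "(k / s) * (k * s) \<le> (k / s) * inner b d"
      using assms(3) k s by (intro mult_left_mono) (auto simp: s_def)
    ultimately show ?thesis by linarith
  qed
  also have "\<dots> = 0" using s by (simp add: field_simps power2_eq_square)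
  finally show ?thesis by (simp add: s_def)
qed

lemma regular_subdiff_scaled_dist_inner:
  fixes ybar v b :: "'b::real_inner"
  assumes b: "b \<in> regular_subdiff (\<lambda>y. k * norm (y - ybar)) v" and "v \<noteq> ybar"
  shows "k * norm (v - ybar) \<le> inner b (v - ybar)"
proof (rule ccontr)
  define d where "d = v - ybar"
  define s where "s = norm d"
  have s: "s > 0" using \<open>v \<noteq> ybar\<close> by (simp add: s_def d_def)
  assume "\<not> ?thesis"
  then have h: "inner b d < k * s" by (simp add: d_def s_def)
  define \<epsilon> where "\<epsilon> = (k * s - inner b d) / (2 * s)"
  have "\<epsilon> > 0" using h s by (simp add: \<epsilon>_def)
  then obtain \<delta> where \<delta>: "\<delta> > 0" "\<And>v'. norm (v' - v) < \<delta> \<Longrightarrow>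
      k * norm (v' - ybar) - k * norm (v - ybar) - inner b (v' - v) \<ge> - \<epsilon> * norm (v' - v)"
    using b unfolding regular_subdiff_def by blast
  \<comment> \<open>moving from v towards ybar decreases the function at rate k, so b must achieve that rate\<close>
  define t where "t = min (\<delta> / (2 * s)) (1 / 2)"
  have t: "t > 0" "t \<le> 1 / 2" "t * s < \<delta>" using \<delta> s by (auto simp: t_def min_def field_simps)
  define v' where "v' = v - t *\<^sub>R d"
  have "v' - ybar = (1 - t) *\<^sub>R d" by (simp add: v'_def d_def algebra_simps)
  then have "norm (v' - ybar) = (1 - t) * s" using t by (simp add: s_def)
  moreover have "norm (v' - v) = t * s" using t by (simp add: v'_def s_def)
  moreover have "inner b (v' - v) = - t * inner b d" by (simp add: v'_def)
  ultimately have "k * ((1 - t) * s) - k * s + t * inner b d \<ge> - \<epsilon> * (t * s)"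
    using \<delta>(2)[of v'] t by (simp add: d_def[symmetric] s_def[symmetric])
  then have "t * (inner b d - k * s + \<epsilon> * s) \<ge> 0" by (simp add: algebra_simps)
  then have "inner b d - k * s + \<epsilon> * s \<ge> 0" using t(1) by (simp add: zero_le_mult_iff)
  then show False using h s by (simp add: \<epsilon>_def field_simps)
qed

lemma regular_subdiff_scaled_dist:
  fixes ybar v b :: "'b::real_inner"
  assumes "b \<in> regular_subdiff (\<lambda>y. k * norm (y - ybar)) v" "v \<noteq> ybar" "norm b \<le> k"
  shows "b = (k / norm (v - ybar)) *\<^sub>R (v - ybar)"
  using assms by (intro eq_scaled_of_inner_ge regular_subdiff_scaled_dist_inner) auto

lemma regular_subdiff_scaled_dist_perturbed:
  fixes p ybar v b e :: "'a::real_inner"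
  assumes "b \<in> regular_subdiff (\<lambda>y. k * norm (y - ybar)) v" "norm b \<le> k" "v \<noteq> ybar" "p \<noteq> 0" "k > 0"
  shows "k - norm e \<le> norm (b + e)" "norm (b + e) \<le> k + norm e"
    and "norm ((1 / norm p) *\<^sub>R p - (1 / norm (b + e)) *\<^sub>R (b + e))
      \<le> 2 * norm (p - (v - ybar)) / norm p + 2 * norm e / k"
proof -
  have b: "b = (k / norm (v - ybar)) *\<^sub>R (v - ybar)" using assms(1,3,2) by (rule regular_subdiff_scaled_dist)
  then have "norm b = k" using assms(3,5) by simp
  then show "k - norm e \<le> norm (b + e)" "norm (b + e) \<le> k + norm e"
    using norm_triangle_ineq[of b e] norm_triangle_ineq2[of b "- e"] by auto
  show "norm ((1 / norm p) *\<^sub>R p - (1 / norm (b + e)) *\<^sub>R (b + e))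
      \<le> 2 * norm (p - (v - ybar)) / norm p + 2 * norm e / k"
    unfolding b using assms(3-5) by (intro norm_sgn_diff_scaled_sgn_add) auto
qed

lemma limiting_subdiffI_seq:
  assumes "isCont f x" "\<And>k. a k \<in> regular_subdiff f (w k)" "w \<longlonglongrightarrow> x" "a \<longlonglongrightarrow> a0"
  shows "a0 \<in> limiting_subdiff f x"
  unfolding limiting_subdiff_def
  using assms isCont_tendsto_compose[OF assms(1,3)] by blast

lemma limiting_coderivI_seq:
  assumes "\<And>k. xs k \<in> regular_coderiv \<Phi> (x k) (y k) (lam k)"
    and "x \<longlonglongrightarrow> x0" "y \<longlonglongrightarrow> y0" "xs \<longlonglongrightarrow> xs0" "lam \<longlonglongrightarrow> lam0"
  shows "xs0 \<in> limiting_coderiv \<Phi> x0 y0 lam0"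
proof -
  have "(xs k, - lam k) \<in> regular_normal_cone (gph \<Phi>) (x k, y k)" for k
    using assms(1) by (simp add: regular_coderiv_def)
  moreover have "(x k, y k) \<in> gph \<Phi>" for k
    using calculation by (simp add: regular_normal_cone_def)
  moreover have "(\<lambda>k. (x k, y k)) \<longlonglongrightarrow> (x0, y0)" "(\<lambda>k. (xs k, - lam k)) \<longlonglongrightarrow> (xs0, - lam0)"
    using assms(2-5) by (auto intro: tendsto_Pair tendsto_minus)
  ultimately show ?thesis
    unfolding limiting_coderiv_def limiting_normal_cone_def
    by (intro CollectI exI[of _ "\<lambda>k. (x k, y k)"] exI[of _ "\<lambda>k. (xs k, - lam k)"]) auto
qed

section \<open>A fuzzy sum rule\<close>

lemma doubling_penalty_estimate:
  fixes m L M d1 d2 s \<delta> :: real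
  assumes ineq: "m * d1\<^sup>2 + m * d2\<^sup>2 + s \<le> L * d1 + M * d2"
    and nonneg: "0 \<le> d1" "0 \<le> d2" "0 \<le> s" "0 \<le> L" "0 \<le> M"
    and big: "L + M < m * \<delta>" "(L + M)\<^sup>2 < m * \<delta>\<^sup>2"
  shows "d1 < \<delta>" "d2 < \<delta>" "s < \<delta>\<^sup>2"
proof -
  define N where "N = L + M"
  define d where "d = max d1 d2"
  have "m * \<delta>\<^sup>2 > 0" using big(2) by (smt (verit) zero_le_power2)
  then have m: "m > 0" by (simp add: zero_less_mult_iff)
  have d: "d \<ge> 0" "d1 \<le> d" "d2 \<le> d" using nonneg by (auto simp: d_def)
  have "m * d\<^sup>2 \<le> m * d1\<^sup>2 + m * d2\<^sup>2"
    using m nonneg by (auto simp: d_def max_def)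
  also have "\<dots> \<le> L * d1 + M * d2 - s" using ineq by simp
  also have "\<dots> \<le> N * d - s"
    using nonneg d by (simp add: N_def distrib_right add_mono mult_left_mono)
  finally have quad: "m * d\<^sup>2 \<le> N * d - s" .
  have md: "m * d \<le> N"
  proof (cases "d = 0")
    case True
    then show ?thesis using nonneg by (simp add: N_def)
  next
    case False
    then have "(m * d) * d \<le> N * d" using quad nonneg by (simp add: power2_eq_square algebra_simps)
    then show ?thesis using False d(1) by simp
  qed
  then have "m * d < m * \<delta>" using big(1) by (simp add: N_def)
  then have "d < \<delta>" using m by simp
  then show "d1 < \<delta>" "d2 < \<delta>" using d by auto
  have "m * s \<le> m * (N * d)" using quad m d(1) by (smt (verit) mult_left_mono zero_le_power2 mult_nonneg_nonneg)
  also have "\<dots> = N * (m * d)" by simp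
  also have "\<dots> \<le> N * N" using md nonneg by (intro mult_left_mono) (auto simp: N_def)
  also have "\<dots> < m * \<delta>\<^sup>2" using big(2) by (simp add: N_def power2_eq_square)
  finally show "s < \<delta>\<^sup>2" using m by simp
qed

text \<open>Doubling of variables: the points w and v at which \<phi> and \<psi> are evaluated are tied to
  (x, y) by a quadratic penalty of weight m, and the last two terms localize at (xh, yh).\<close>
definition doubled_objective ::
    "('a::real_normed_vector \<Rightarrow> real) \<Rightarrow> ('b::real_normed_vector \<Rightarrow> real) \<Rightarrow> 'a \<Rightarrow> 'a \<Rightarrow> 'b \<Rightarrow> real \<Rightarrow>
      'a \<Rightarrow> 'b \<Rightarrow> 'a \<Rightarrow> 'b \<Rightarrow> real" where
  "doubled_objective \<phi> \<psi> p xh yh m x y w v = \<phi> w + \<psi> v + (norm (x - p))\<^sup>2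
     + m * (norm (x - w))\<^sup>2 + m * (norm (y - v))\<^sup>2 + (norm (x - xh))\<^sup>2 + (norm (y - yh))\<^sup>2"

lemma doubled_min_subgradients:
  fixes \<phi> :: "'a::real_inner \<Rightarrow> real" and \<psi> :: "'b::real_inner \<Rightarrow> real"
  assumes xy: "(x, y) \<in> C" and "\<rho> > 0" "m \<ge> 0"
    and min: "\<And>x' y' w' v'. (x', y') \<in> C \<Longrightarrow> norm (x' - x) < \<rho> \<Longrightarrow> norm (y' - y) < \<rho> \<Longrightarrow>
        norm (w' - w) < \<rho> \<Longrightarrow> norm (v' - v) < \<rho> \<Longrightarrow>
        doubled_objective \<phi> \<psi> p xh yh m x y w v \<le> doubled_objective \<phi> \<psi> p xh yh m x' y' w' v'"
  shows "(2 * m) *\<^sub>R (x - w) \<in> regular_subdiff \<phi> w"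
    and "(2 * m) *\<^sub>R (y - v) \<in> regular_subdiff \<psi> v"
proof -
  let ?H = "doubled_objective \<phi> \<psi> p xh yh m"
  show "(2 * m) *\<^sub>R (x - w) \<in> regular_subdiff \<phi> w"
  proof (rule regular_subdiff_of_prox_min[OF \<open>\<rho> > 0\<close> \<open>m \<ge> 0\<close>])
    fix w' assume "norm (w' - w) < \<rho>"
    then have "?H x y w v \<le> ?H x y w' v" using min[OF xy] \<open>\<rho> > 0\<close> by simp
    then show "\<phi> w + m * (norm (x - w))\<^sup>2 \<le> \<phi> w' + m * (norm (x - w'))\<^sup>2" by (simp add: doubled_objective_def)
  qed
  show "(2 * m) *\<^sub>R (y - v) \<in> regular_subdiff \<psi> v"
  proof (rule regular_subdiff_of_prox_min[OF \<open>\<rho> > 0\<close> \<open>m \<ge> 0\<close>])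
    fix v' assume "norm (v' - v) < \<rho>"
    then have "?H x y w v \<le> ?H x y w v'" using min[OF xy] \<open>\<rho> > 0\<close> by simp
    then show "\<psi> v + m * (norm (y - v))\<^sup>2 \<le> \<psi> v' + m * (norm (y - v'))\<^sup>2" by (simp add: doubled_objective_def)
  qed
qed

lemma doubled_min_normal:
  fixes \<phi> :: "'a::real_inner \<Rightarrow> real" and \<psi> :: "'b::real_inner \<Rightarrow> real"
  assumes xy: "(x, y) \<in> C" and "\<rho> > 0" "m \<ge> 0"
    and min: "\<And>x' y' w' v'. (x', y') \<in> C \<Longrightarrow> norm (x' - x) < \<rho> \<Longrightarrow> norm (y' - y) < \<rho> \<Longrightarrow>
        norm (w' - w) < \<rho> \<Longrightarrow> norm (v' - v) < \<rho> \<Longrightarrow>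
        doubled_objective \<phi> \<psi> p xh yh m x y w v \<le> doubled_objective \<phi> \<psi> p xh yh m x' y' w' v'"
  shows "(- ((2 * m) *\<^sub>R (x - w) + 2 *\<^sub>R (x - p) + 2 *\<^sub>R (x - xh)),
          - ((2 * m) *\<^sub>R (y - v) + 2 *\<^sub>R (y - yh))) \<in> regular_normal_cone C (x, y)"
proof (rule regular_normal_coneI_quadratic[OF xy \<open>\<rho> > 0\<close>, of "m + 2"])
  show "m + 2 \<ge> 0" using \<open>m \<ge> 0\<close> by simp
  fix z' assume z': "z' \<in> C" "norm (z' - (x, y)) < \<rho>"
  obtain x' y' where z'_eq: "z' = (x', y')" by fastforce
  have "norm (x' - x) < \<rho>" "norm (y' - y) < \<rho>"
    using z' norm_fst_le[of "x' - x" "y' - y"] norm_snd_le[of "y' - y" "x' - x"]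
    by (auto simp: z'_eq)
  then have H: "(norm (x - p))\<^sup>2 + m * (norm (x - w))\<^sup>2 + m * (norm (y - v))\<^sup>2 + (norm (x - xh))\<^sup>2
      + (norm (y - yh))\<^sup>2 \<le> (norm (x' - p))\<^sup>2 + m * (norm (x' - w))\<^sup>2 + m * (norm (y' - v))\<^sup>2
      + (norm (x' - xh))\<^sup>2 + (norm (y' - yh))\<^sup>2"
    using min[of x' y' w v] z' \<open>\<rho> > 0\<close> by (simp add: z'_eq doubled_objective_def)
  have "inner (- ((2 * m) *\<^sub>R (x - w) + 2 *\<^sub>R (x - p) + 2 *\<^sub>R (x - xh)),
        - ((2 * m) *\<^sub>R (y - v) + 2 *\<^sub>R (y - yh))) (z' - (x, y))
      = - (2 * m * inner (x - w) (x' - x) + 2 * inner (x - p) (x' - x) + 2 * inner (x - xh) (x' - x))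
        - (2 * m * inner (y - v) (y' - y) + 2 * inner (y - yh) (y' - y))"
    by (simp add: z'_eq algebra_simps)
  also have "\<dots> \<le> (m + 2) * (norm (x' - x))\<^sup>2 + (m + 1) * (norm (y' - y))\<^sup>2"
    using H[unfolded power2_norm_diff_shift[of x' p x] power2_norm_diff_shift[of x' w x]
        power2_norm_diff_shift[of x' xh x] power2_norm_diff_shift[of y' v y]
        power2_norm_diff_shift[of y' yh y]]
    by (simp add: algebra_simps del: inner_diff_left inner_diff_right)
  also have "\<dots> \<le> (m + 2) * (norm (z' - (x, y)))\<^sup>2"
    using \<open>m \<ge> 0\<close> by (simp add: z'_eq norm_Pair algebra_simps)
  finally show "inner (- ((2 * m) *\<^sub>R (x - w) + 2 *\<^sub>R (x - p) + 2 *\<^sub>R (x - xh)),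
        - ((2 * m) *\<^sub>R (y - v) + 2 *\<^sub>R (y - yh))) (z' - (x, y)) \<le> (m + 2) * (norm (z' - (x, y)))\<^sup>2" .
qed

lemma doubled_objective_minimizer:
  fixes \<phi> :: "'a::euclidean_space \<Rightarrow> real" and \<psi> :: "'b::euclidean_space \<Rightarrow> real"
  assumes C: "closed C" and "(xh, yh) \<in> C" "r \<ge> 0"
    and cont: "continuous_on (cball xh r) \<phi>" "continuous_on (cball yh r) \<psi>"
  obtains x y w v where "(x, y) \<in> C" "norm (x - xh) \<le> r" "norm (y - yh) \<le> r"
    "norm (w - xh) \<le> r" "norm (v - yh) \<le> r"
    "\<And>x' y' w' v'. (x', y') \<in> C \<Longrightarrow> norm (x' - xh) \<le> r \<Longrightarrow> norm (y' - yh) \<le> r \<Longrightarrow>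
      norm (w' - xh) \<le> r \<Longrightarrow> norm (v' - yh) \<le> r \<Longrightarrow>
      doubled_objective \<phi> \<psi> p xh yh m x y w v \<le> doubled_objective \<phi> \<psi> p xh yh m x' y' w' v'"
proof -
  define B where "B = cball xh r \<times> cball yh r"
  define K where "K = (C \<inter> B) \<times> B"
  let ?H = "\<lambda>((x, y), (w, v)). doubled_objective \<phi> \<psi> p xh yh m x y w v"
  have inK: "((x, y), (w, v)) \<in> K \<longleftrightarrow> (x, y) \<in> C \<and> norm (x - xh) \<le> r \<and> norm (y - yh) \<le> r
      \<and> norm (w - xh) \<le> r \<and> norm (v - yh) \<le> r" for x y w v
    by (auto simp: K_def B_def dist_norm norm_minus_commute)
  have "compact K"
    unfolding K_def B_def using C by (intro compact_Times closed_Int_compact compact_cball) auto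
  moreover have "((xh, yh), (xh, yh)) \<in> K" using inK assms(2,3) by auto
  moreover have "continuous_on K ?H"
  proof -
    have "continuous_on K (\<lambda>q. \<phi> (fst (snd q)))" "continuous_on K (\<lambda>q. \<psi> (snd (snd q)))"
      by (auto intro!: continuous_on_compose2[OF cont(1)] continuous_on_compose2[OF cont(2)]
          continuous_on_fst continuous_on_snd continuous_on_id simp: K_def B_def)
    then show ?thesis unfolding doubled_objective_def case_prod_beta' by (intro continuous_intros)
  qed
  ultimately obtain q where q: "q \<in> K" "\<And>q'. q' \<in> K \<Longrightarrow> ?H q \<le> ?H q'"
    using continuous_attains_inf[of K ?H] by blast
  obtain x y w v where "q = ((x, y), (w, v))" by (metis prod.collapse)
  then have "((x, y), (w, v)) \<in> K" and
    "\<And>x' y' w' v'. ((x', y'), (w', v')) \<in> K \<Longrightarrow>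
      doubled_objective \<phi> \<psi> p xh yh m x y w v \<le> doubled_objective \<phi> \<psi> p xh yh m x' y' w' v'"
    using q by fastforce+
  then show ?thesis using that[of x y w v] unfolding inK by blast
qed

lemma doubled_minimizer_near_centre:
  fixes \<phi> :: "'a::real_inner \<Rightarrow> real" and \<psi> :: "'b::real_inner \<Rightarrow> real"
  assumes lip\<phi>: "L-lipschitz_on (cball xh r) \<phi>" and lip\<psi>: "M-lipschitz_on (cball yh r) \<psi>"
    and min: "\<phi> xh + \<psi> yh + (norm (xh - p))\<^sup>2 \<le> \<phi> x + \<psi> y + (norm (x - p))\<^sup>2"
    and balls: "norm (x - xh) \<le> r" "norm (y - yh) \<le> r" "norm (w - xh) \<le> r" "norm (v - yh) \<le> r"
    and below_centre: "doubled_objective \<phi> \<psi> p xh yh m x y w v \<le> doubled_objective \<phi> \<psi> p xh yh m xh yh xh yh"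
    and "\<delta> > 0" and big: "L + M < m * \<delta>" "(L + M)\<^sup>2 < m * \<delta>\<^sup>2"
  shows "norm (x - w) < \<delta>" "norm (y - v) < \<delta>" "norm (x - xh) < \<delta>" "norm (y - yh) < \<delta>"
proof -
  have "x \<in> cball xh r" "w \<in> cball xh r" "y \<in> cball yh r" "v \<in> cball yh r"
    using balls by (auto simp: dist_norm norm_minus_commute)
  then have "\<phi> x - \<phi> w \<le> L * norm (x - w)" "\<psi> y - \<psi> v \<le> M * norm (y - v)"
    by (auto intro!: lipschitz_on_diff_le[OF lip\<phi>] lipschitz_on_diff_le[OF lip\<psi>])
  then have "m * (norm (x - w))\<^sup>2 + m * (norm (y - v))\<^sup>2 + ((norm (x - xh))\<^sup>2 + (norm (y - yh))\<^sup>2)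
      \<le> L * norm (x - w) + M * norm (y - v)"
    using min below_centre by (simp add: doubled_objective_def)
  from doubling_penalty_estimate[OF this _ _ _ lipschitz_on_nonneg[OF lip\<phi>] lipschitz_on_nonneg[OF lip\<psi>] big]
  have "norm (x - w) < \<delta>" "norm (y - v) < \<delta>" "(norm (x - xh))\<^sup>2 + (norm (y - yh))\<^sup>2 < \<delta>\<^sup>2"
    by simp_all
  moreover from this(3) have "(norm (x - xh))\<^sup>2 < \<delta>\<^sup>2" "(norm (y - yh))\<^sup>2 < \<delta>\<^sup>2"
    using zero_le_power2[of "norm (x - xh)"] zero_le_power2[of "norm (y - yh)"] by linarith+
  ultimately show "norm (x - w) < \<delta>" "norm (y - v) < \<delta>" "norm (x - xh) < \<delta>" "norm (y - yh) < \<delta>"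
    using \<open>\<delta> > 0\<close> by (auto intro: power_less_imp_less_base)
qed

lemma doubling_weight_exists:
  fixes N \<delta> :: real
  assumes "N \<ge> 0" "\<delta> > 0"
  obtains m where "m > 0" "N < m * \<delta>" "N\<^sup>2 < m * \<delta>\<^sup>2"
proof
  define m where "m = (N + 1) / \<delta> + (N\<^sup>2 + 1) / \<delta>\<^sup>2"
  have pos: "(N + 1) / \<delta> > 0" "(N\<^sup>2 + 1) / \<delta>\<^sup>2 > 0" using assms by (simp_all add: add_nonneg_pos)
  then show "m > 0" by (simp add: m_def)
  have "m * \<delta> = N + 1 + (N\<^sup>2 + 1) / \<delta>" "m * \<delta>\<^sup>2 = (N + 1) * \<delta> + N\<^sup>2 + 1"
    using assms by (simp_all add: m_def field_simps power2_eq_square)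
  then show "N < m * \<delta>" "N\<^sup>2 < m * \<delta>\<^sup>2" using assms pos by (simp_all add: add_nonneg_pos)
qed

lemma fuzzy_sum_rule:
  fixes \<phi> :: "'a::euclidean_space \<Rightarrow> real" and \<psi> :: "'b::euclidean_space \<Rightarrow> real"
  assumes C: "closed C" and zh: "(xh, yh) \<in> C" and r: "r > 0" and \<eta>: "\<eta> > 0"
    and lip\<phi>: "L-lipschitz_on (cball xh r) \<phi>" and lip\<psi>: "M-lipschitz_on (cball yh r) \<psi>"
    and min: "\<And>x y. (x, y) \<in> C \<Longrightarrow> norm (x - xh) \<le> r \<Longrightarrow> norm (y - yh) \<le> r \<Longrightarrow>
        \<phi> xh + \<psi> yh + (norm (xh - p))\<^sup>2 \<le> \<phi> x + \<psi> y + (norm (x - p))\<^sup>2"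
  shows "\<exists>x y w v a b e1 e2. (x, y) \<in> C \<and> norm (x - xh) < \<eta> \<and> norm (y - yh) < \<eta>
       \<and> norm (w - xh) < \<eta> \<and> norm (v - yh) < \<eta>
       \<and> a \<in> regular_subdiff \<phi> w \<and> b \<in> regular_subdiff \<psi> v \<and> norm a \<le> L \<and> norm b \<le> M
       \<and> norm e1 < \<eta> \<and> norm e2 < \<eta>
       \<and> (- (a + 2 *\<^sub>R (x - p) + e1), - (b + e2)) \<in> regular_normal_cone C (x, y)"
proof -
  define \<delta> where "\<delta> = min r \<eta> / 4"
  have \<delta>: "\<delta> > 0" "4 * \<delta> \<le> r" "4 * \<delta> \<le> \<eta>" using r \<eta> by (auto simp: \<delta>_def)
  have "L + M \<ge> 0" using lipschitz_on_nonneg[OF lip\<phi>] lipschitz_on_nonneg[OF lip\<psi>] by simp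
  \<comment> \<open>the weight m of the doubling penalty is chosen so large that the minimizer is \<delta>-close to the centre\<close>
  then obtain m where m: "m > 0" and big: "L + M < m * \<delta>" "(L + M)\<^sup>2 < m * \<delta>\<^sup>2"
    using doubling_weight_exists \<delta>(1) by blast
  obtain x y w v where xy: "(x, y) \<in> C" "norm (x - xh) \<le> r" "norm (y - yh) \<le> r"
      "norm (w - xh) \<le> r" "norm (v - yh) \<le> r"
    and Hmin: "\<And>x' y' w' v'. (x', y') \<in> C \<Longrightarrow> norm (x' - xh) \<le> r \<Longrightarrow> norm (y' - yh) \<le> r \<Longrightarrow>
      norm (w' - xh) \<le> r \<Longrightarrow> norm (v' - yh) \<le> r \<Longrightarrow>
      doubled_objective \<phi> \<psi> p xh yh m x y w v \<le> doubled_objective \<phi> \<psi> p xh yh m x' y' w' v'"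
    using doubled_objective_minimizer[where p = p and m = m, OF C zh less_imp_le[OF r]
        lipschitz_on_continuous_on[OF lip\<phi>] lipschitz_on_continuous_on[OF lip\<psi>]] by metis
  have "doubled_objective \<phi> \<psi> p xh yh m x y w v \<le> doubled_objective \<phi> \<psi> p xh yh m xh yh xh yh"
    using Hmin[OF zh] r by simp
  note close = doubled_minimizer_near_centre[OF lip\<phi> lip\<psi> min[OF xy(1-3)] xy(2-5) this \<delta>(1) big]
  then have wv_close: "norm (w - xh) < 2 * \<delta>" "norm (v - yh) < 2 * \<delta>"
    using norm_diff_triangle_less[of w x \<delta> xh \<delta>] norm_diff_triangle_less[of v y \<delta> yh \<delta>]
    by (auto simp: norm_minus_commute)
  \<comment> \<open>near the minimizer the constraints defining the compact set are inactive\<close>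
  have near: "norm (a - c) \<le> r" if "norm (a' - c) < 2 * \<delta>" "norm (a - a') < r / 2"
    for a a' c :: "'c::real_normed_vector"
    using that \<delta> norm_diff_triangle_less[of a a' "r / 2" c "2 * \<delta>"] by simp
  have loc: "doubled_objective \<phi> \<psi> p xh yh m x y w v \<le> doubled_objective \<phi> \<psi> p xh yh m x' y' w' v'"
    if "(x', y') \<in> C" "norm (x' - x) < r / 2" "norm (y' - y) < r / 2"
       "norm (w' - w) < r / 2" "norm (v' - v) < r / 2" for x' y' w' v'
    using that close wv_close \<delta>(1) near[of x xh x'] near[of y yh y'] near[of w xh w'] near[of v yh v']
    by (intro Hmin) auto
  have r2: "r / 2 > 0" using r by simp
  have opt: "(2 * m) *\<^sub>R (x - w) \<in> regular_subdiff \<phi> w" "(2 * m) *\<^sub>R (y - v) \<in> regular_subdiff \<psi> v"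
    "(- ((2 * m) *\<^sub>R (x - w) + 2 *\<^sub>R (x - p) + 2 *\<^sub>R (x - xh)),
      - ((2 * m) *\<^sub>R (y - v) + 2 *\<^sub>R (y - yh))) \<in> regular_normal_cone C (x, y)"
    by (assumption | rule doubled_min_subgradients[OF xy(1) r2 less_imp_le[OF m]]
        doubled_min_normal[OF xy(1) r2 less_imp_le[OF m]] loc)+
  have balls: "ball w (r / 2) \<subseteq> cball xh r" "ball v (r / 2) \<subseteq> cball yh r"
    using near[of w xh] near[of v yh] wv_close by (auto simp: dist_norm norm_minus_commute)
  have "norm ((2 * m) *\<^sub>R (x - w)) \<le> L"
    by (rule regular_subdiff_norm_le[OF opt(1) lip\<phi> balls(1) r2])
  moreover have "norm ((2 * m) *\<^sub>R (y - v)) \<le> M"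
    by (rule regular_subdiff_norm_le[OF opt(2) lip\<psi> balls(2) r2])
  moreover have "norm (2 *\<^sub>R (x - xh)) < \<eta>" "norm (2 *\<^sub>R (y - yh)) < \<eta>"
    "norm (x - xh) < \<eta>" "norm (y - yh) < \<eta>" "norm (w - xh) < \<eta>" "norm (v - yh) < \<eta>"
    using close wv_close \<delta> by auto
  ultimately show ?thesis
    using xy(1) opt by blast
qed

section \<open>Exact penalization\<close>

definition M_stationary :: "('a::real_inner \<Rightarrow> real) \<Rightarrow> ('a \<Rightarrow> 'b::real_inner set) \<Rightarrow> 'a \<Rightarrow> 'b \<Rightarrow> bool" where
  "M_stationary \<phi> \<Phi> xbar ybar \<longleftrightarrow>
     (\<exists>a. a \<in> limiting_subdiff \<phi> xbar \<and> - a \<in> Im (limiting_coderiv \<Phi> xbar ybar))"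

lemma penalty_rate_estimates:
  fixes L k th sh t s \<eta> l :: real and n :: nat
  assumes k: "real n + 1 \<le> k" and L: "L \<ge> 0" and th: "th > 0" and sh: "sh > 0"
    and t: "th / 2 \<le> t" and s: "sh / 2 \<le> s" "s \<le> sh + \<eta>" and pen: "k * sh < L * th"
    and \<eta>: "0 \<le> \<eta>" "\<eta> \<le> th / (k + 1)" "\<eta> \<le> sh / (2 * (real n + 1))" "\<eta> \<le> 1"
    and l: "0 \<le> l" "l \<le> k + 1"
  shows "s / t \<le> 2 * (L + 1) / (real n + 1)"
    and "s / t * l \<le> 4 * (L + 1)"
    and "2 * (2 * \<eta>) / s + 2 * \<eta> / k \<le> 6 / (real n + 1)"
    and "L * \<eta> / t \<le> 2 * L / (real n + 1)"
proof -
  have "k > 0" "k \<ge> 1" using k by (simp_all add: add_nonneg_pos)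
  have "t > 0" "s > 0" using t s th sh by linarith+
  have "th / (k + 1) \<le> th / k" using th \<open>k > 0\<close> by (intro divide_left_mono) auto
  moreover have "sh < L * th / k" using pen \<open>k > 0\<close> by (simp add: field_simps)
  moreover have "(L + 1) * th / k = L * th / k + th / k" by (simp add: add_divide_distrib distrib_right)
  ultimately have "s \<le> (L + 1) * th / k" using s(2) \<eta>(2) by linarith
  then have "s / t \<le> ((L + 1) * th / k) / (th / 2)"
    using t th \<open>t > 0\<close> L \<open>k > 0\<close> by (intro frac_le) auto
  also have "\<dots> = 2 * (L + 1) / k" using th \<open>k > 0\<close> by (simp add: field_simps)
  finally have ratio: "s / t \<le> 2 * (L + 1) / k" .
  also have "\<dots> \<le> 2 * (L + 1) / (real n + 1)" using k L by (intro divide_left_mono) auto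
  finally show "s / t \<le> 2 * (L + 1) / (real n + 1)" .
  have "s / t * l \<le> 2 * (L + 1) / k * (k + 1)"
    using ratio l \<open>s > 0\<close> \<open>t > 0\<close> \<open>k > 0\<close> L by (intro mult_mono) auto
  also have "\<dots> = 2 * (L + 1) * ((k + 1) / k)" by simp
  also have "\<dots> \<le> 2 * (L + 1) * 2" using \<open>k \<ge> 1\<close> L by (intro mult_left_mono) (auto simp: field_simps)
  finally show "s / t * l \<le> 4 * (L + 1)" by simp
  have "2 * (2 * \<eta>) / s \<le> 2 * (2 * \<eta>) / (sh / 2)" using s sh \<eta>(1) by (intro divide_left_mono) auto
  also have "\<dots> \<le> 4 / (real n + 1)" using \<eta>(3) sh by (simp add: field_simps)
  finally have "2 * (2 * \<eta>) / s \<le> 4 / (real n + 1)" .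
  moreover have "2 * \<eta> / k \<le> 2 / (real n + 1)" using \<eta>(1,4) k \<open>k > 0\<close> by (intro frac_le) auto
  ultimately show "2 * (2 * \<eta>) / s + 2 * \<eta> / k \<le> 6 / (real n + 1)"
    by (simp add: add_divide_distrib[symmetric])
  have "L * \<eta> / t \<le> L * (th / (k + 1)) / (th / 2)"
    using t th \<eta>(1,2) L by (intro frac_le mult_left_mono mult_nonneg_nonneg) auto
  also have "\<dots> = 2 * L / (k + 1)"
    using th \<open>k > 0\<close> by (simp add: divide_simps add_pos_pos[THEN less_imp_neq, symmetric])
  also have "\<dots> \<le> 2 * L / (real n + 1)" using k L by (intro divide_left_mono) auto
  finally show "L * \<eta> / t \<le> 2 * L / (real n + 1)" .
qed

locale localized_problem =
  fixes \<phi> :: "'a::euclidean_space \<Rightarrow> real" and \<Phi> :: "'a \<Rightarrow> 'b::euclidean_space set"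
    and xbar :: 'a and ybar :: 'b and \<rho> L :: real
  assumes closed_gph: "closed (gph \<Phi>)"
    and radius_pos: "\<rho> > 0"
    and lipschitz: "L-lipschitz_on (cball xbar \<rho>) \<phi>"
    and feasible: "ybar \<in> \<Phi> xbar"
    and local_min: "\<And>x. ybar \<in> \<Phi> x \<Longrightarrow> norm (x - xbar) \<le> \<rho> \<Longrightarrow> \<phi> xbar \<le> \<phi> x"
begin

lemma lipschitz_const_nonneg: "L \<ge> 0"
  using lipschitz by (rule lipschitz_on_nonneg)

lemma mem_cball_xbar: "x \<in> cball xbar \<rho> \<longleftrightarrow> norm (x - xbar) \<le> \<rho>"
  by (simp add: dist_norm norm_minus_commute)

lemma isCont_at_xbar: "isCont \<phi> xbar"
  using continuous_on_interior[OF lipschitz_on_continuous_on[OF lipschitz]] radius_pos by simp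

definition penalty :: "real \<Rightarrow> 'a \<Rightarrow> 'b \<Rightarrow> real" where
  "penalty k x y = \<phi> x + k * norm (y - ybar) + (norm (x - xbar))\<^sup>2"

definition minimizes_penalty :: "real \<Rightarrow> 'a \<Rightarrow> 'b \<Rightarrow> bool" where
  "minimizes_penalty k x y \<longleftrightarrow> (x, y) \<in> gph \<Phi> \<and> norm (x - xbar) \<le> \<rho> \<and> norm (y - ybar) \<le> \<rho> \<and>
     (\<forall>x' y'. (x', y') \<in> gph \<Phi> \<longrightarrow> norm (x' - xbar) \<le> \<rho> \<longrightarrow> norm (y' - ybar) \<le> \<rho> \<longrightarrow>
        penalty k x y \<le> penalty k x' y')"

text \<open>Besides the error e, the coderivative inclusion carries the gradient 2 (x - xbar) of the
  localizing term of the penalty.\<close>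
definition fuzzy_stationary :: "real \<Rightarrow> 'a \<Rightarrow> 'b \<Rightarrow> 'a \<Rightarrow> 'a \<Rightarrow> 'b \<Rightarrow> 'a \<Rightarrow> bool" where
  "fuzzy_stationary \<tau> x y w a lam e \<longleftrightarrow>
     a \<in> regular_subdiff \<phi> w \<and> norm a \<le> L \<and> - (a + 2 *\<^sub>R (x - xbar) + e) \<in> regular_coderiv \<Phi> x y lam \<and>
     norm (x - xbar) \<le> \<tau> \<and> norm (y - ybar) \<le> \<tau> \<and> norm (w - xbar) \<le> \<tau> \<and> norm e \<le> \<tau>"

lemma fuzzy_stationary_limit:
  assumes fs: "\<And>n. fuzzy_stationary (\<tau> n) (X n) (Y n) (W n) (A n) (Lam n) (E n)"
    and "\<tau> \<longlonglongrightarrow> 0" and "A \<longlonglongrightarrow> a0"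
  shows "X \<longlonglongrightarrow> xbar" "Y \<longlonglongrightarrow> ybar"
    and "a0 \<in> limiting_subdiff \<phi> xbar"
    and "(\<lambda>n. - (A n + 2 *\<^sub>R (X n - xbar) + E n)) \<longlonglongrightarrow> - a0"
proof -
  have bounds: "norm (X n - xbar) \<le> \<tau> n" "norm (Y n - ybar) \<le> \<tau> n" "norm (W n - xbar) \<le> \<tau> n"
    "norm (E n - 0) \<le> \<tau> n" for n
    using fs[of n] by (auto simp: fuzzy_stationary_def)
  show X: "X \<longlonglongrightarrow> xbar" and "Y \<longlonglongrightarrow> ybar"
    using bounds \<open>\<tau> \<longlonglongrightarrow> 0\<close> by (auto intro: tendsto_of_norm_diff_le[where g = \<tau>])
  have "W \<longlonglongrightarrow> xbar" "E \<longlonglongrightarrow> 0"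
    using bounds \<open>\<tau> \<longlonglongrightarrow> 0\<close> by (auto intro: tendsto_of_norm_diff_le[where g = \<tau>])
  then show "a0 \<in> limiting_subdiff \<phi> xbar"
    using fs \<open>A \<longlonglongrightarrow> a0\<close> by (intro limiting_subdiffI_seq[OF isCont_at_xbar]) (auto simp: fuzzy_stationary_def)
  have "(\<lambda>n. - (A n + 2 *\<^sub>R (X n - xbar) + E n)) \<longlonglongrightarrow> - (a0 + 2 *\<^sub>R (xbar - xbar) + 0)"
    using \<open>A \<longlonglongrightarrow> a0\<close> X \<open>E \<longlonglongrightarrow> 0\<close> by (intro tendsto_intros)
  then show "(\<lambda>n. - (A n + 2 *\<^sub>R (X n - xbar) + E n)) \<longlonglongrightarrow> - a0" by simp
qed

lemma penalty_minimizer_exists: "\<exists>x y. minimizes_penalty k x y"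
proof -
  define D where "D = gph \<Phi> \<inter> (cball xbar \<rho> \<times> cball ybar \<rho>)"
  have "compact D"
    unfolding D_def using closed_gph by (intro closed_Int_compact compact_Times compact_cball) auto
  moreover have "(xbar, ybar) \<in> D" using feasible radius_pos by (simp add: D_def gph_def)
  moreover have "continuous_on D (\<lambda>z. penalty k (fst z) (snd z))"
  proof -
    have "continuous_on D (\<lambda>z. \<phi> (fst z))"
      by (rule continuous_on_compose2[OF lipschitz_on_continuous_on[OF lipschitz]])
        (auto intro: continuous_on_fst continuous_on_id simp: D_def)
    then show ?thesis unfolding penalty_def by (intro continuous_intros)
  qed
  ultimately obtain z where "z \<in> D" "\<And>z'. z' \<in> D \<Longrightarrow> penalty k (fst z) (snd z) \<le> penalty k (fst z') (snd z')"
    using continuous_attains_inf[of D "\<lambda>z. penalty k (fst z) (snd z)"] by blast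
  moreover obtain x y where "z = (x, y)" by fastforce
  ultimately have "(x, y) \<in> D" "\<And>x' y'. (x', y') \<in> D \<Longrightarrow> penalty k x y \<le> penalty k x' y'"
    by auto
  moreover have "(x', y') \<in> D \<longleftrightarrow> (x', y') \<in> gph \<Phi> \<and> norm (x' - xbar) \<le> \<rho> \<and> norm (y' - ybar) \<le> \<rho>" for x' y'
    by (simp add: D_def dist_norm norm_minus_commute)
  ultimately show ?thesis unfolding minimizes_penalty_def by blast
qed

lemma fuzzy_point_near_penalty_minimizer:
  assumes min: "minimizes_penalty k Xs Ys" and "k \<ge> 0" and "\<eta> > 0"
    and near: "norm (Xs - xbar) < \<rho> / 2" "norm (Ys - ybar) < \<rho> / 2"
  obtains x y w v a b e1 e2 where "norm (x - Xs) < \<eta>" "norm (y - Ys) < \<eta>" "norm (w - Xs) < \<eta>"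
    "norm (v - Ys) < \<eta>" "a \<in> regular_subdiff \<phi> w" "norm a \<le> L"
    "b \<in> regular_subdiff (\<lambda>y. k * norm (y - ybar)) v" "norm b \<le> k" "norm e1 < \<eta>" "norm e2 < \<eta>"
    "- (a + 2 *\<^sub>R (x - xbar) + e1) \<in> regular_coderiv \<Phi> x y (b + e2)"
proof -
  have near_ball: "norm (z - c') \<le> \<rho>" if "norm (z - c) \<le> \<rho> / 2" "norm (c - c') < \<rho> / 2"
    for z c c' :: "'c::real_normed_vector"
    using that norm_diff_triangle_le[of z c "\<rho> / 2" c' "\<rho> / 2"] by simp
  have "cball Xs (\<rho> / 2) \<subseteq> cball xbar \<rho>"
    using near(1) near_ball[of _ Xs xbar] by (auto simp: dist_norm norm_minus_commute)
  then have lip: "L-lipschitz_on (cball Xs (\<rho> / 2)) \<phi>" using lipschitz lipschitz_on_subset by blast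
  have "\<phi> Xs + k * norm (Ys - ybar) + (norm (Xs - xbar))\<^sup>2 \<le> \<phi> x + k * norm (y - ybar) + (norm (x - xbar))\<^sup>2"
    if "(x, y) \<in> gph \<Phi>" "norm (x - Xs) \<le> \<rho> / 2" "norm (y - Ys) \<le> \<rho> / 2" for x y
    using min that near near_ball[of x Xs xbar] near_ball[of y Ys ybar]
    by (simp add: minimizes_penalty_def penalty_def)
  moreover have "(Xs, Ys) \<in> gph \<Phi>" "\<rho> / 2 > 0" using min radius_pos by (simp_all add: minimizes_penalty_def)
  ultimately obtain x y w v a b e1 e2 where "(x, y) \<in> gph \<Phi>" "norm (x - Xs) < \<eta>" "norm (y - Ys) < \<eta>"
    "norm (w - Xs) < \<eta>" "norm (v - Ys) < \<eta>" "a \<in> regular_subdiff \<phi> w"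
    "b \<in> regular_subdiff (\<lambda>y. k * norm (y - ybar)) v" "norm a \<le> L" "norm b \<le> k" "norm e1 < \<eta>" "norm e2 < \<eta>"
    "(- (a + 2 *\<^sub>R (x - xbar) + e1), - (b + e2)) \<in> regular_normal_cone (gph \<Phi>) (x, y)"
    using fuzzy_sum_rule[where p = xbar, OF closed_gph _ _ \<open>\<eta> > 0\<close> lip
        lipschitz_on_scaled_dist[OF \<open>k \<ge> 0\<close>, where c = ybar]]
    by blast
  then show ?thesis by (intro that[of x y w v a b e1 e2]) (simp_all add: regular_coderiv_def)
qed

lemma M_stationary_of_fuzzy_stationary:
  assumes fs: "\<And>n. fuzzy_stationary (\<tau> n) (X n) (Y n) (W n) (A n) (Lam n) (E n)"
    and "\<tau> \<longlonglongrightarrow> 0" and Lam: "\<And>n. norm (Lam n) \<le> B"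
  shows "M_stationary \<phi> \<Phi> xbar ybar"
proof -
  obtain r a0 lam0 where r: "strict_mono r" "(A \<circ> r) \<longlonglongrightarrow> a0" "(Lam \<circ> r) \<longlonglongrightarrow> lam0"
    using bounded_pair_convergent_subseq[of A L Lam B] fs Lam by (auto simp: fuzzy_stationary_def)
  have "(\<lambda>n. \<tau> (r n)) \<longlonglongrightarrow> 0" using LIMSEQ_subseq_LIMSEQ[OF \<open>\<tau> \<longlonglongrightarrow> 0\<close> r(1)] by (simp add: o_def)
  note lim = fuzzy_stationary_limit[OF fs this r(2)[unfolded o_def]]
  have "- a0 \<in> limiting_coderiv \<Phi> xbar ybar lam0"
    using fs lim(1,2,4) r(3) by (intro limiting_coderivI_seq) (auto simp: fuzzy_stationary_def o_def)
  then show ?thesis using lim(3) by (auto simp: M_stationary_def Im_def)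
qed

lemma M_stationary_if_exact_penalty:
  assumes "k \<ge> 0" and exact: "minimizes_penalty k xbar ybar"
  shows "M_stationary \<phi> \<Phi> xbar ybar"
proof -
  have "\<forall>n. \<exists>x y w a lam e. fuzzy_stationary (1 / (real n + 1)) x y w a lam e \<and> norm lam \<le> k + 1"
  proof
    fix n :: nat
    have \<eta>: "1 / (real n + 1) > 0" "1 / (real n + 1) \<le> 1" by (simp_all add: field_simps)
    have centre: "norm (xbar - xbar) < \<rho> / 2" "norm (ybar - ybar) < \<rho> / 2" using radius_pos by simp_all
    obtain x y w v a b e1 e2 where "norm (x - xbar) < 1 / (real n + 1)" "norm (y - ybar) < 1 / (real n + 1)"
      "norm (w - xbar) < 1 / (real n + 1)" "norm (v - ybar) < 1 / (real n + 1)"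
      "a \<in> regular_subdiff \<phi> w" "norm a \<le> L" "b \<in> regular_subdiff (\<lambda>y. k * norm (y - ybar)) v"
      "norm b \<le> k" "norm e1 < 1 / (real n + 1)" "norm e2 < 1 / (real n + 1)"
      "- (a + 2 *\<^sub>R (x - xbar) + e1) \<in> regular_coderiv \<Phi> x y (b + e2)"
      by (rule fuzzy_point_near_penalty_minimizer[OF exact \<open>k \<ge> 0\<close> \<eta>(1) centre])
    moreover have "norm (b + e2) \<le> k + 1"
      using norm_triangle_ineq[of b e2] \<eta>(2) calculation by linarith
    ultimately show "\<exists>x y w a lam e. fuzzy_stationary (1 / (real n + 1)) x y w a lam e \<and> norm lam \<le> k + 1"
      unfolding fuzzy_stationary_def by (blast intro: less_imp_le)
  qed
  then obtain X Y W A Lam E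
    where "\<forall>n. fuzzy_stationary (1 / (real n + 1)) (X n) (Y n) (W n) (A n) (Lam n) (E n) \<and> norm (Lam n) \<le> k + 1"
    unfolding choice_iff by blast
  then show ?thesis by (intro M_stationary_of_fuzzy_stationary[OF _ tendsto_const_over_Suc]) auto
qed

section \<open>Inexact penalization and asymptotic regularity\<close>

lemma inexact_penalty_minimizer:
  assumes min: "minimizes_penalty k x y" and inexact: "\<not> minimizes_penalty k xbar ybar" and "k \<ge> 0"
  shows "\<phi> x + (norm (x - xbar))\<^sup>2 < \<phi> xbar" "ybar \<notin> \<Phi> x" "x \<noteq> xbar" "y \<noteq> ybar"
    "k * norm (y - ybar) < L * norm (x - xbar)"
proof -
  have xbar: "(xbar, ybar) \<in> gph \<Phi>" "norm (xbar - xbar) \<le> \<rho>" "norm (ybar - ybar) \<le> \<rho>"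
    using feasible radius_pos by (auto simp: gph_def)
  have "penalty k x y < \<phi> xbar"
    using min inexact xbar by (force simp: minimizes_penalty_def penalty_def)
  then have below: "\<phi> x + k * norm (y - ybar) + (norm (x - xbar))\<^sup>2 < \<phi> xbar"
    by (simp add: penalty_def)
  moreover have "0 \<le> k * norm (y - ybar)" using \<open>k \<ge> 0\<close> by simp
  ultimately show "\<phi> x + (norm (x - xbar))\<^sup>2 < \<phi> xbar" by linarith
  then have "\<phi> x < \<phi> xbar" using zero_le_power2[of "norm (x - xbar)"] by linarith
  then show "ybar \<notin> \<Phi> x" using local_min min by (force simp: minimizes_penalty_def)
  then show "x \<noteq> xbar" "y \<noteq> ybar" using feasible min by (auto simp: minimizes_penalty_def gph_def)
  have "\<phi> xbar - \<phi> x \<le> L * norm (xbar - x)"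
    using min radius_pos
    by (intro lipschitz_on_diff_le[OF lipschitz]) (auto simp: minimizes_penalty_def dist_norm norm_minus_commute)
  then have "\<phi> xbar - \<phi> x \<le> L * norm (x - xbar)" by (simp add: norm_minus_commute)
  moreover have "(norm (x - xbar))\<^sup>2 > 0" using \<open>x \<noteq> xbar\<close> by simp
  ultimately show "k * norm (y - ybar) < L * norm (x - xbar)"
    using below by linarith
qed

lemma inexact_penalty_minimizer_dist:
  assumes min: "minimizes_penalty k x y" and inexact: "\<not> minimizes_penalty k xbar ybar" and "k \<ge> 0"
  shows "norm (y - ybar) \<le> (L + 1) * \<rho> / (k + 1)"
proof -
  have dom: "norm (x - xbar) \<le> \<rho>" "norm (y - ybar) \<le> \<rho>" using min by (simp_all add: minimizes_penalty_def)
  have "k * norm (y - ybar) \<le> L * \<rho>"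
    using inexact_penalty_minimizer(5)[OF assms] mult_left_mono[OF dom(1) lipschitz_const_nonneg] by linarith
  then have "(k + 1) * norm (y - ybar) \<le> (L + 1) * \<rho>" using dom(2) by (simp add: algebra_simps)
  then show ?thesis using \<open>k \<ge> 0\<close> by (simp add: field_simps)
qed

lemma inexact_penalty_minimizer_slope:
  assumes "minimizes_penalty k Xs Ys" "\<not> minimizes_penalty k xbar ybar" "k \<ge> 0" "norm (x - xbar) \<le> \<rho>"
  shows "\<phi> x - \<phi> xbar \<le> L * norm (x - Xs)"
proof -
  have "x \<in> cball xbar \<rho>" "Xs \<in> cball xbar \<rho>"
    unfolding mem_cball_xbar using assms by (simp_all add: minimizes_penalty_def)
  then have "\<phi> x - \<phi> Xs \<le> L * norm (x - Xs)" by (rule lipschitz_on_diff_le[OF lipschitz])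
  then show ?thesis using inexact_penalty_minimizer(1)[OF assms(1-3)] zero_le_power2[of "norm (Xs - xbar)"]
    by linarith
qed

lemma infeasible_nbhd:
  assumes "ybar \<notin> \<Phi> x0"
  obtains \<delta> where "\<delta> > 0" "\<And>x. norm (x - x0) < \<delta> \<Longrightarrow> ybar \<notin> \<Phi> x"
proof -
  have "{x. ybar \<in> \<Phi> x} = (\<lambda>x. (x, ybar)) -` gph \<Phi>" by (auto simp: gph_def)
  also have "closed \<dots>" by (rule closed_vimage[OF closed_gph]) (intro continuous_intros)
  finally have "open (- {x. ybar \<in> \<Phi> x})" by (rule open_Compl)
  then obtain \<delta> where "\<delta> > 0" and ball: "ball x0 \<delta> \<subseteq> - {x. ybar \<in> \<Phi> x}"
    using assms open_contains_ball by blast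
  moreover have "ybar \<notin> \<Phi> x" if "norm (x - x0) < \<delta>" for x
    using that ball by (auto simp: dist_norm norm_minus_commute)
  ultimately show ?thesis using that by blast
qed

lemma inexact_penalty_minimizers_converge:
  assumes min: "\<And>k. minimizes_penalty (real k) (X k) (Y k)"
    and inexact: "\<And>k. \<not> minimizes_penalty (real k) xbar ybar"
  obtains r where "strict_mono r" "(\<lambda>n. X (r n)) \<longlonglongrightarrow> xbar" "(\<lambda>n. Y (r n)) \<longlonglongrightarrow> ybar"
proof -
  note below = inexact_penalty_minimizer[OF min inexact of_nat_0_le_iff]
  have dom: "(X k, Y k) \<in> gph \<Phi>" "norm (X k - xbar) \<le> \<rho>" "norm (Y k - ybar) \<le> \<rho>" for k
    using min[of k] by (auto simp: minimizes_penalty_def)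
  have Y: "Y \<longlonglongrightarrow> ybar"
    using inexact_penalty_minimizer_dist[OF min inexact of_nat_0_le_iff]
    by (rule tendsto_of_norm_diff_le[OF _ tendsto_const_over_Suc])
  have "norm (X k) \<le> norm xbar + \<rho>" "norm (Y k) \<le> norm ybar + \<rho>" for k
    using norm_triangle_sub[of "X k" xbar] norm_triangle_sub[of "Y k" ybar] dom[of k]
    by (auto simp: norm_minus_commute)
  then obtain r x' y' where r: "strict_mono r" "(X \<circ> r) \<longlonglongrightarrow> x'" "(Y \<circ> r) \<longlonglongrightarrow> y'"
    by (rule bounded_pair_convergent_subseq)
  have "y' = ybar" using LIMSEQ_unique[OF r(3) LIMSEQ_subseq_LIMSEQ[OF Y r(1)]] .
  have cb: "\<forall>n. (X \<circ> r) n \<in> cball xbar \<rho>" unfolding o_def mem_cball_xbar using dom(2) by simp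
  then have "x' \<in> cball xbar \<rho>" using closed_sequentially[OF closed_cball _ r(2)] by blast
  moreover have "(x', ybar) \<in> gph \<Phi>"
    using closed_sequentially[OF closed_gph _ tendsto_Pair[OF r(2,3)]] dom(1) \<open>y' = ybar\<close> by auto
  ultimately have "\<phi> xbar \<le> \<phi> x'" using local_min by (simp add: dist_norm norm_minus_commute gph_def)
  moreover have "\<phi> x' + (norm (x' - xbar))\<^sup>2 \<le> \<phi> xbar"
  proof (rule LIMSEQ_le_const2)
    have "(\<lambda>n. \<phi> (X (r n))) \<longlonglongrightarrow> \<phi> x'"
      using continuous_on_tendsto_compose[OF lipschitz_on_continuous_on[OF lipschitz] r(2)[unfolded o_def]
          \<open>x' \<in> cball xbar \<rho>\<close> always_eventually[OF cb[unfolded o_def]]] .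
    moreover have "(\<lambda>n. X (r n)) \<longlonglongrightarrow> x'" using r(2) by (simp add: o_def)
    ultimately show "(\<lambda>n. \<phi> (X (r n)) + (norm (X (r n) - xbar))\<^sup>2) \<longlonglongrightarrow> \<phi> x' + (norm (x' - xbar))\<^sup>2"
      by (intro tendsto_intros)
    show "\<exists>N. \<forall>n\<ge>N. \<phi> (X (r n)) + (norm (X (r n) - xbar))\<^sup>2 \<le> \<phi> xbar"
      using below(1) less_imp_le by blast
  qed
  ultimately have "(norm (x' - xbar))\<^sup>2 \<le> 0" by linarith
  then have "x' = xbar" by simp
  then show ?thesis using that[OF r(1)] r(2,3) \<open>y' = ybar\<close> by (simp add: o_def)
qed

lemma inexact_penalty_minimizers_near_xbar:
  assumes inexact: "\<And>k::nat. \<not> minimizes_penalty (real k) xbar ybar"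
  obtains k :: "nat \<Rightarrow> nat" and X Y where "\<And>n. minimizes_penalty (real (k n)) (X n) (Y n)"
    "\<And>n. real n + 1 \<le> real (k n)" "\<And>n. norm (X n - xbar) < \<rho> / 2" "\<And>n. norm (Y n - ybar) < \<rho> / 2"
    "X \<longlonglongrightarrow> xbar" "Y \<longlonglongrightarrow> ybar"
proof -
  have "\<forall>k::nat. \<exists>x y. minimizes_penalty (real k) x y" using penalty_minimizer_exists by blast
  then obtain X Y where "\<forall>k::nat. minimizes_penalty (real k) (X k) (Y k)" unfolding choice_iff by blast
  then have min: "\<And>k. minimizes_penalty (real k) (X k) (Y k)" by blast
  obtain r where r: "strict_mono r" "(\<lambda>n. X (r n)) \<longlonglongrightarrow> xbar" "(\<lambda>n. Y (r n)) \<longlonglongrightarrow> ybar"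
    by (rule inexact_penalty_minimizers_converge[OF min inexact])
  have "\<forall>\<^sub>F n in sequentially. norm (X (r n) - xbar) < \<rho> / 2 \<and> norm (Y (r n) - ybar) < \<rho> / 2"
    using r(2,3)[THEN LIM_zero, THEN tendsto_norm_zero] radius_pos
    by (intro eventually_conj order_tendstoD(2)) auto
  then obtain N where N: "\<And>n. n \<ge> N \<Longrightarrow> norm (X (r n) - xbar) < \<rho> / 2 \<and> norm (Y (r n) - ybar) < \<rho> / 2"
    unfolding eventually_sequentially by blast
  \<comment> \<open>skipping the first N + 1 minimizers also makes the penalty parameter exceed n + 1\<close>
  define k where "k n = r (n + N + 1)" for n
  show ?thesis
  proof (rule that[of k "\<lambda>n. X (k n)" "\<lambda>n. Y (k n)"])
    show "minimizes_penalty (real (k n)) (X (k n)) (Y (k n))" for n by (rule min)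
    show "real n + 1 \<le> real (k n)" for n using seq_suble[OF r(1), of "n + N + 1"] by (simp add: k_def)
    show "norm (X (k n) - xbar) < \<rho> / 2" "norm (Y (k n) - ybar) < \<rho> / 2" for n
      using N[of "n + N + 1"] by (simp_all add: k_def)
    show "(\<lambda>n. X (k n)) \<longlonglongrightarrow> xbar" "(\<lambda>n. Y (k n)) \<longlonglongrightarrow> ybar"
      using LIMSEQ_ignore_initial_segment[OF r(2), of "N + 1"] LIMSEQ_ignore_initial_segment[OF r(3), of "N + 1"]
      by (simp_all add: k_def add.assoc)
  qed
qed

text \<open>A point satisfying, at precision 1/(n + 1), the conditions imposed on the sequences in the
  definition of asymptotic regularity.\<close>
definition asymptotic_witness :: "nat \<Rightarrow> real \<Rightarrow> 'a \<Rightarrow> 'b \<Rightarrow> 'a \<Rightarrow> 'a \<Rightarrow> 'b \<Rightarrow> 'a \<Rightarrow> bool" where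
  "asymptotic_witness n \<tau> x y w a lam e \<longleftrightarrow> fuzzy_stationary \<tau> x y w a lam e \<and>
     ybar \<notin> \<Phi> x \<and> y \<noteq> ybar \<and> x \<noteq> xbar \<and> real n \<le> norm lam \<and>
     norm (y - ybar) / norm (x - xbar) \<le> 2 * (L + 1) / (real n + 1) \<and>
     norm (y - ybar) / norm (x - xbar) * norm lam \<le> 4 * (L + 1) \<and>
     norm ((1 / norm (y - ybar)) *\<^sub>R (y - ybar) - (1 / norm lam) *\<^sub>R lam) \<le> 6 / (real n + 1) \<and>
     (\<phi> x - \<phi> xbar) / norm (x - xbar) \<le> 2 * L / (real n + 1)"

lemma asymptotic_witness_at_penalty_minimizer:
  assumes min: "minimizes_penalty k Xs Ys" and inexact: "\<not> minimizes_penalty k xbar ybar"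
    and k: "real n + 1 \<le> k"
    and near: "norm (Xs - xbar) < \<rho> / 2" "norm (Ys - ybar) < \<rho> / 2"
  shows "\<exists>x y w a lam e. asymptotic_witness n (2 * (norm (Xs - xbar) + norm (Ys - ybar))) x y w a lam e"
proof -
  define th sh where "th = norm (Xs - xbar)" and "sh = norm (Ys - ybar)"
  have "k > 0" using k by (simp add: add_nonneg_pos)
  note below = inexact_penalty_minimizer[OF min inexact less_imp_le[OF \<open>k > 0\<close>]]
  have th: "th > 0" and sh: "sh > 0" using below by (simp_all add: th_def sh_def)
  obtain \<delta> where \<delta>: "\<delta> > 0" "\<And>x. norm (x - Xs) < \<delta> \<Longrightarrow> ybar \<notin> \<Phi> x"
    using infeasible_nbhd[OF below(2)] by blast
  define \<eta> where "\<eta> = min (min \<delta> 1) (min (sh / (2 * (real n + 1))) (th / (k + 1)))"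
  have \<eta>: "\<eta> > 0" "\<eta> \<le> \<delta>" "\<eta> \<le> 1" "\<eta> \<le> sh / (2 * (real n + 1))" "\<eta> \<le> th / (k + 1)"
    using \<delta> th sh \<open>k > 0\<close> by (auto simp: \<eta>_def)
  have "sh / (2 * (real n + 1)) \<le> sh / 2" "th / (k + 1) \<le> th / 2"
    using sh th k by (intro divide_left_mono; simp)+
  then have \<eta>_half: "\<eta> \<le> sh / 2" "\<eta> \<le> th / 2" using \<eta> by linarith+
  obtain x y w v a b e1 e2 where F: "norm (x - Xs) < \<eta>" "norm (y - Ys) < \<eta>" "norm (w - Xs) < \<eta>"
    "norm (v - Ys) < \<eta>" "a \<in> regular_subdiff \<phi> w" "norm a \<le> L"
    "b \<in> regular_subdiff (\<lambda>y. k * norm (y - ybar)) v" "norm b \<le> k" "norm e1 < \<eta>" "norm e2 < \<eta>"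
    "- (a + 2 *\<^sub>R (x - xbar) + e1) \<in> regular_coderiv \<Phi> x y (b + e2)"
    by (rule fuzzy_point_near_penalty_minimizer[OF min less_imp_le[OF \<open>k > 0\<close>] \<eta>(1) near])
  define t s where "t = norm (x - xbar)" and "s = norm (y - ybar)"
  have t: "th / 2 \<le> t" "t \<le> 2 * th" and s: "sh / 2 \<le> s" "s \<le> 2 * sh"
    and w: "norm (w - xbar) \<le> 2 * th" and v: "sh / 2 \<le> norm (v - ybar)"
    using norm_diff_near_bounds[OF F(1)] norm_diff_near_bounds[OF F(2)]
      norm_diff_near_bounds[OF F(3)] norm_diff_near_bounds[OF F(4)] \<eta>_half
    by (auto simp: t_def s_def th_def sh_def)
  have "s \<le> sh + \<eta>" using norm_triangle_ineq2[of "y - ybar" "Ys - ybar"] F(2)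
    by (simp add: s_def sh_def norm_minus_commute)
  have "y \<noteq> ybar" "v \<noteq> ybar" using s v sh by (auto simp: s_def)
  define lam where "lam = b + e2"
  note mult = regular_subdiff_scaled_dist_perturbed[OF F(7,8) \<open>v \<noteq> ybar\<close> _ \<open>k > 0\<close>,
      of "y - ybar" e2, folded lam_def]
  have lam: "real n \<le> norm lam" "norm lam \<le> k + 1"
    using mult(1,2) \<open>y \<noteq> ybar\<close> F(10) \<eta>(3) k by auto
  note rates = penalty_rate_estimates[OF k lipschitz_const_nonneg th sh t(1) s(1) \<open>s \<le> sh + \<eta>\<close>
      below(5)[folded th_def sh_def] less_imp_le[OF \<eta>(1)] \<eta>(5,4,3) norm_ge_zero lam(2)]
  have "norm (y - v) < 2 * \<eta>"
    using norm_diff_triangle_less[OF F(2), of v \<eta>] F(4) by (simp add: norm_minus_commute)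
  then have "2 * norm ((y - ybar) - (v - ybar)) / s \<le> 2 * (2 * \<eta>) / s"
    using s sh by (intro divide_right_mono) auto
  moreover have "2 * norm e2 / k \<le> 2 * \<eta> / k" using F(10) \<open>k > 0\<close> by (intro divide_right_mono) auto
  ultimately have direction: "norm ((1 / s) *\<^sub>R (y - ybar) - (1 / norm lam) *\<^sub>R lam) \<le> 6 / (real n + 1)"
    using mult(3) \<open>y \<noteq> ybar\<close> rates(3) by (simp add: s_def)
  have "norm (x - xbar) \<le> \<rho>" using t near by (simp add: t_def th_def)
  then have "\<phi> x - \<phi> xbar \<le> L * norm (x - Xs)"
    by (rule inexact_penalty_minimizer_slope[OF min inexact less_imp_le[OF \<open>k > 0\<close>]])
  also have "\<dots> \<le> L * \<eta>" using F(1) lipschitz_const_nonneg by (intro mult_left_mono) auto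
  finally have "(\<phi> x - \<phi> xbar) / t \<le> L * \<eta> / t" using t th by (intro divide_right_mono) auto
  then have "(\<phi> x - \<phi> xbar) / t \<le> 2 * L / (real n + 1)" using rates(4) by linarith
  moreover have "ybar \<notin> \<Phi> x" using \<delta>(2) F(1) \<eta>(2) by simp
  moreover have "norm e1 \<le> th" using F(9) \<eta>_half th by simp
  ultimately have "asymptotic_witness n (2 * (th + sh)) x y w a lam e1"
    using F(5,6,11) t s w th sh lam(1) rates(1,2) direction
    unfolding asymptotic_witness_def fuzzy_stationary_def lam_def t_def s_def by auto
  then show ?thesis unfolding th_def sh_def by blast
qed

lemma asymptotic_witness_mono:
  assumes "asymptotic_witness n \<tau> x y w a lam e" "m \<le> n"
  shows "asymptotic_witness m \<tau> x y w a lam e"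
proof -
  have "c / (real n + 1) \<le> c / (real m + 1)" if "c \<ge> 0" for c
    using that \<open>m \<le> n\<close> by (intro divide_left_mono) auto
  then have "2 * (L + 1) / (real n + 1) \<le> 2 * (L + 1) / (real m + 1)"
    "6 / (real n + 1) \<le> 6 / (real m + 1)" "2 * L / (real n + 1) \<le> 2 * L / (real m + 1)"
    using lipschitz_const_nonneg by simp_all
  moreover have "real m \<le> real n" using \<open>m \<le> n\<close> by simp
  ultimately show ?thesis using assms(1) unfolding asymptotic_witness_def by linarith
qed

lemma asymptotic_witness_limits:
  assumes W: "\<And>n. asymptotic_witness n (\<tau> n) (X n) (Y n) (W n) (A n) (Lam n) (E n)"
  shows "(\<lambda>n. (1 / norm (X n - xbar)) *\<^sub>R (Y n - ybar)) \<longlonglongrightarrow> 0"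
    and "(\<lambda>n. (1 / norm (Y n - ybar)) *\<^sub>R (Y n - ybar) - (1 / norm (Lam n)) *\<^sub>R Lam n) \<longlonglongrightarrow> 0"
    and "filterlim (\<lambda>n. norm (Lam n)) at_top sequentially"
proof -
  show "(\<lambda>n. (1 / norm (X n - xbar)) *\<^sub>R (Y n - ybar)) \<longlonglongrightarrow> 0"
    using W by (intro tendsto_of_norm_diff_le[OF _ tendsto_const_over_Suc[of "2 * (L + 1)"]])
      (simp add: asymptotic_witness_def)
  show "(\<lambda>n. (1 / norm (Y n - ybar)) *\<^sub>R (Y n - ybar) - (1 / norm (Lam n)) *\<^sub>R Lam n) \<longlonglongrightarrow> 0"
    using W by (intro tendsto_of_norm_diff_le[OF _ tendsto_const_over_Suc[of 6]])
      (simp add: asymptotic_witness_def)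
  show "filterlim (\<lambda>n. norm (Lam n)) at_top sequentially"
    using W by (intro filterlim_at_top_mono[OF filterlim_real_sequentially] always_eventually)
      (simp add: asymptotic_witness_def)
qed

lemma critical_direction_of_witnesses:
  assumes W: "\<And>n. asymptotic_witness n (\<tau> n) (X n) (Y n) (W n) (A n) (Lam n) (E n)"
    and "\<tau> \<longlonglongrightarrow> 0" and u: "(\<lambda>n. (1 / norm (X n - xbar)) *\<^sub>R (X n - xbar)) \<longlonglongrightarrow> u0"
  shows "critical_direction \<phi> \<Phi> xbar ybar u0"
proof -
  define t where "t n = norm (X n - xbar)" for n
  define v where "v n = (1 / norm (X n - xbar)) *\<^sub>R (Y n - ybar)" for n
  have wit: "X n \<noteq> xbar" "(X n, Y n) \<in> gph \<Phi>" "norm (X n - xbar) \<le> \<tau> n"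
    "(\<phi> (X n) - \<phi> xbar) / norm (X n - xbar) \<le> 2 * L / (real n + 1)" for n
    using W[of n] unfolding asymptotic_witness_def fuzzy_stationary_def regular_coderiv_def
      regular_normal_cone_def by auto
  then have t: "t n > 0" for n by (simp add: t_def)
  have "(\<lambda>n. norm ((1 / norm (X n - xbar)) *\<^sub>R (X n - xbar))) \<longlonglongrightarrow> norm u0" by (rule tendsto_norm[OF u])
  then have "norm u0 = 1" using wit(1) by (simp add: LIMSEQ_const_iff)
  moreover have "v \<longlonglongrightarrow> 0" unfolding v_def using W by (rule asymptotic_witness_limits)
  moreover have "t \<longlonglongrightarrow> 0"
    unfolding t_def by (rule tendsto_of_norm_diff_le[where g = \<tau>, OF _ \<open>\<tau> \<longlonglongrightarrow> 0\<close>]) (simp add: wit(3))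
  moreover have "xbar + t n *\<^sub>R ((1 / norm (X n - xbar)) *\<^sub>R (X n - xbar)) = X n"
    and "ybar + t n *\<^sub>R v n = Y n" for n
    using t[of n] by (simp_all add: t_def v_def)
  moreover have "limsup (\<lambda>n. ereal ((\<phi> (X n) - \<phi> xbar) / t n)) \<le> 0"
  proof -
    have "limsup (\<lambda>n. ereal ((\<phi> (X n) - \<phi> xbar) / t n)) \<le> limsup (\<lambda>n. ereal (2 * L / (real n + 1)))"
      using wit(4) by (intro Limsup_mono always_eventually allI) (simp add: t_def)
    also have "\<dots> = 0"
      using lim_imp_Limsup[OF sequentially_bot tendsto_ereal[OF tendsto_const_over_Suc]]
      by (simp add: zero_ereal_def)
    finally show ?thesis .
  qed
  ultimately show ?thesis
    unfolding critical_direction_def using u t wit(2)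
    by (intro conjI exI[of _ "\<lambda>n. (1 / norm (X n - xbar)) *\<^sub>R (X n - xbar)"] exI[of _ v] exI[of _ t]) auto
qed

lemma M_stationary_of_witness_limits:
  assumes W: "\<And>n. asymptotic_witness n (\<tau> n) (X n) (Y n) (W n) (A n) (Lam n) (E n)"
    and "\<tau> \<longlonglongrightarrow> 0" "A \<longlonglongrightarrow> a0"
    and u: "(\<lambda>n. (1 / norm (X n - xbar)) *\<^sub>R (X n - xbar)) \<longlonglongrightarrow> u0"
    and q: "(\<lambda>n. (norm (Y n - ybar) / norm (X n - xbar)) *\<^sub>R Lam n) \<longlonglongrightarrow> ys0"
    and AR: "asymptotically_regular \<Phi> xbar ybar u0"
  shows "M_stationary \<phi> \<Phi> xbar ybar"
proof -
  have fs: "\<And>n. fuzzy_stationary (\<tau> n) (X n) (Y n) (W n) (A n) (Lam n) (E n)"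
    using W by (simp add: asymptotic_witness_def)
  note lim = fuzzy_stationary_limit[OF fs \<open>\<tau> \<longlonglongrightarrow> 0\<close> \<open>A \<longlonglongrightarrow> a0\<close>]
  have "(X n, Y n) \<in> gph \<Phi>" "ybar \<notin> \<Phi> (X n)" "Y n \<noteq> ybar"
    "- (A n + 2 *\<^sub>R (X n - xbar) + E n) \<in> regular_coderiv \<Phi> (X n) (Y n) (Lam n)" for n
    using W[of n] unfolding asymptotic_witness_def fuzzy_stationary_def regular_coderiv_def
      regular_normal_cone_def by auto
  then have "- a0 \<in> Im (limiting_coderiv \<Phi> xbar ybar)"
    using lim(1,2,4) u q asymptotic_witness_limits[OF W]
    by (intro AR[unfolded asymptotically_regular_def, rule_format,
          of X Y "\<lambda>n. - (A n + 2 *\<^sub>R (X n - xbar) + E n)" Lam "- a0" ys0]) auto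
  then show ?thesis using lim(3) by (auto simp: M_stationary_def)
qed

lemma M_stationary_of_asymptotic_witnesses:
  assumes AR: "\<And>u. critical_direction \<phi> \<Phi> xbar ybar u \<Longrightarrow> asymptotically_regular \<Phi> xbar ybar u"
    and W: "\<And>n. asymptotic_witness n (\<tau> n) (X n) (Y n) (W n) (A n) (Lam n) (E n)" and "\<tau> \<longlonglongrightarrow> 0"
  shows "M_stationary \<phi> \<Phi> xbar ybar"
proof -
  define u where "u n = (1 / norm (X n - xbar)) *\<^sub>R (X n - xbar)" for n
  define q where "q n = (norm (Y n - ybar) / norm (X n - xbar)) *\<^sub>R Lam n" for n
  have A: "norm (A n) \<le> L" and uq: "norm (u n) = 1" "norm (q n) \<le> 4 * (L + 1)" for n
    using W[of n] by (auto simp: asymptotic_witness_def fuzzy_stationary_def u_def q_def)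
  have "norm (u n, q n) \<le> 1 + 4 * (L + 1)" for n
    using norm_Pair_le[of "u n" "q n"] uq[of n] by linarith
  then obtain r a0 uq where r: "strict_mono r" "(A \<circ> r) \<longlonglongrightarrow> a0" "((\<lambda>n. (u n, q n)) \<circ> r) \<longlonglongrightarrow> uq"
    by (rule bounded_pair_convergent_subseq[OF A])
  have W_r: "asymptotic_witness n (\<tau> (r n)) (X (r n)) (Y (r n)) (W (r n)) (A (r n)) (Lam (r n)) (E (r n))" for n
    using asymptotic_witness_mono[OF W seq_suble[OF r(1)]] .
  have \<tau>_r: "(\<lambda>n. \<tau> (r n)) \<longlonglongrightarrow> 0" using LIMSEQ_subseq_LIMSEQ[OF \<open>\<tau> \<longlonglongrightarrow> 0\<close> r(1)] by (simp add: o_def)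
  have A_r: "(\<lambda>n. A (r n)) \<longlonglongrightarrow> a0" using r(2) by (simp add: o_def)
  have u_r: "(\<lambda>n. (1 / norm (X (r n) - xbar)) *\<^sub>R (X (r n) - xbar)) \<longlonglongrightarrow> fst uq"
    and q_r: "(\<lambda>n. (norm (Y (r n) - ybar) / norm (X (r n) - xbar)) *\<^sub>R Lam (r n)) \<longlonglongrightarrow> snd uq"
    using tendsto_fst[OF r(3)] tendsto_snd[OF r(3)] by (simp_all add: o_def u_def q_def)
  have crit: "critical_direction \<phi> \<Phi> xbar ybar (fst uq)"
    by (rule critical_direction_of_witnesses[OF W_r \<tau>_r u_r])
  show ?thesis by (rule M_stationary_of_witness_limits[OF W_r \<tau>_r A_r u_r q_r AR[OF crit]])
qed

theorem M_stationary_if_asymptotically_regular: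
  assumes AR: "\<And>u. critical_direction \<phi> \<Phi> xbar ybar u \<Longrightarrow> asymptotically_regular \<Phi> xbar ybar u"
  shows "M_stationary \<phi> \<Phi> xbar ybar"
proof (cases "\<exists>k::nat. minimizes_penalty (real k) xbar ybar")
  case True
  then show ?thesis using M_stationary_if_exact_penalty[OF of_nat_0_le_iff] by blast
next
  case False
  then have inexact: "\<And>k::nat. \<not> minimizes_penalty (real k) xbar ybar" by blast
  obtain k X Y where min: "\<And>n. minimizes_penalty (real (k n)) (X n) (Y n)"
    and k: "\<And>n. real n + 1 \<le> real (k n)"
    and near: "\<And>n. norm (X n - xbar) < \<rho> / 2" "\<And>n. norm (Y n - ybar) < \<rho> / 2"
    and lim: "X \<longlonglongrightarrow> xbar" "Y \<longlonglongrightarrow> ybar"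
    using inexact_penalty_minimizers_near_xbar[OF inexact] by blast
  have "\<forall>n. \<exists>x y w a lam e. asymptotic_witness n (2 * (norm (X n - xbar) + norm (Y n - ybar))) x y w a lam e"
    using asymptotic_witness_at_penalty_minimizer[OF min inexact k near] by blast
  then obtain X' Y' W A Lam E where "\<forall>n. asymptotic_witness n
      (2 * (norm (X n - xbar) + norm (Y n - ybar))) (X' n) (Y' n) (W n) (A n) (Lam n) (E n)"
    unfolding choice_iff by blast
  then have W: "\<And>n. asymptotic_witness n
      (2 * (norm (X n - xbar) + norm (Y n - ybar))) (X' n) (Y' n) (W n) (A n) (Lam n) (E n)"
    by blast
  have \<tau>: "(\<lambda>n. 2 * (norm (X n - xbar) + norm (Y n - ybar))) \<longlonglongrightarrow> 0"
    using lim tendsto_norm_zero[OF LIM_zero] tendsto_add_zero tendsto_mult_right_zero by metis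
  show ?thesis by (rule M_stationary_of_asymptotic_witnesses[OF _ W \<tau>]) (rule AR)
qed

end

theorem mainTheorem2:
  fixes \<phi> :: "'a::euclidean_space \<Rightarrow> real"
    and \<Phi> :: "'a \<Rightarrow> 'b::euclidean_space set"
    and xbar :: 'a and ybar :: 'b
  assumes "locally_lipschitz \<phi>"
    and "closed (gph \<Phi>)"
    and "ybar \<in> Im \<Phi>"
    and "local_minimizer \<phi> \<Phi> ybar xbar"
    and "\<And>u. critical_direction \<phi> \<Phi> xbar ybar u \<Longrightarrow> asymptotically_regular \<Phi> xbar ybar u"
  shows "\<exists>lam :: 'b. \<exists>a b. a \<in> limiting_subdiff \<phi> xbar \<and> b \<in> limiting_coderiv \<Phi> xbar ybar lam \<and> a + b = 0"
proof -
  obtain U L where U: "open U" "xbar \<in> U" "L-lipschitz_on U \<phi>"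
    using assms(1) unfolding locally_lipschitz_def by blast
  obtain \<epsilon> where "\<epsilon> > 0" and min: "\<And>x. ybar \<in> \<Phi> x \<Longrightarrow> dist x xbar < \<epsilon> \<Longrightarrow> \<phi> xbar \<le> \<phi> x"
    and "ybar \<in> \<Phi> xbar"
    using assms(4) unfolding local_minimizer_def by blast
  obtain \<rho>0 where "\<rho>0 > 0" "ball xbar \<rho>0 \<subseteq> U" using U(1,2) open_contains_ball by blast
  define \<rho> where "\<rho> = min (\<rho>0 / 2) (\<epsilon> / 2)"
  have "cball xbar \<rho> \<subseteq> U" using \<open>ball xbar \<rho>0 \<subseteq> U\<close> \<open>\<rho>0 > 0\<close> by (auto simp: \<rho>_def)
  interpret localized_problem \<phi> \<Phi> xbar ybar \<rho> L
    using assms(2) \<open>ybar \<in> \<Phi> xbar\<close> \<open>\<rho>0 > 0\<close> \<open>\<epsilon> > 0\<close> lipschitz_on_subset[OF U(3) \<open>cball xbar \<rho> \<subseteq> U\<close>]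
      min[unfolded dist_norm]
    by unfold_locales (auto simp: \<rho>_def)
  have "M_stationary \<phi> \<Phi> xbar ybar" using M_stationary_if_asymptotically_regular assms(5) .
  then show ?thesis unfolding M_stationary_def Im_def by force
qed

end
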